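(* Suppose $X_i^TX_i=\beta_iI_d$ with $\beta_i>0$ for every client $i$, and let $\{\hat\theta_i\}_{i=1}^n$ be the $\theta$-components of the minimizer of $$\sum_{j=1}^k\Big(\frac{\lambda_j}{2}\|w_j-\bar w\|^2+\sum_{i\in\mathcal I_j}\Big(\frac{1}{2\sigma_i^2}\|y_i-X_i\theta_i\|^2+\frac{\gamma_i}{2}\|\theta_i-w_j\|^2\Big)\Big)$$ over $\theta_i,w_j,\bar w\in\mathbb R^d$, with $\lambda_j=1/\bar\sigma^2$ for all $j$ and $\gamma_i=1/\bar\sigma_j^2$ for $i\in\mathcal I_j$. Fix a client $i$, let $\hat\theta^d_{i'}=(X_{i'}^TX_{i'})^{-1}X_{i'}^Ty_{i'}$, let $W_i\in\mathbb R^{n_i+(n-1)d}$ be the stacked vector $(y_i,(\hat\theta^d_{i'})_{i'\ne i})$ and $Z_i\in\mathbb R^{(n_i+(n-1)d)\times d}$ the stacked matrix $(X_i;I_d;\dots;I_d)$. Then $\hat\theta_i=L^\star W_i$ for a deterministic matrix $L^\star$ with $L^\star Z_i=I_d$, and for every deterministic matrix $L\in\mathbb R^{d\times(n_i+(n-1)d)}$ with $LZ_i=I_d$ (a linear unbiased estimator of $\theta_i^*$ given $W_i$), $$\mathbb E\|\hat\theta_i-\theta_i^*\|^2\le\mathbb E\|LW_i-\theta_i^*\|^2,$$ the expectation being taken over all randomness in the model.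
   Context: Hierarchical linear model: clients $1,\dots,n$ are partitioned into nonempty disjoint clusters $\mathcal I_1,\dots,\mathcal I_k$. For an unknown $\bar\theta^*\in\mathbb R^d$ and known variances $\bar\sigma^2>0$, $\bar\sigma_j^2>0$, $\sigma_i^2>0$: $\bar\theta_j^*=\bar\theta^*+\bar\xi_j$ with $\bar\xi_j\sim\mathcal N(0,\bar\sigma^2I_d)$ ($j=1,\dots,k$); $\theta_i^*=\bar\theta_j^*+\xi_i$ with $\xi_i\sim\mathcal N(0,\bar\sigma_j^2I_d)$ for $i\in\mathcal I_j$; $y_i=X_i\theta_i^*+\epsilon_i$ with $\epsilon_i\sim\mathcal N(0,\sigma_i^2I_{n_i})$, where $X_i\in\mathbb R^{n_i\times d}$ are deterministic design matrices; all $\bar\xi_j,\xi_i,\epsilon_i$ are mutually independent. *)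

theory Defs
  imports "HOL-Analysis.Analysis" "HOL-Probability.Probability"
begin

text \<open>Clients are 0..<n, clusters 0..<k; cluster membership is
  given by a labelling cl (client i' belongs to cluster cl i'). Client i' has
  m i' observations; the design matrix X_i' is given by its rows X i' r (r < m i'),
  vectors in R^(m i') are functions nat => real restricted to indices < m i'.
  All scalar Gaussian coordinates of the noises are indexed by noise_idx.\<close>

datatype 'd noise_idx = ClustN nat 'd | ClientN nat 'd | ObsN nat nat

definition noise_set :: "nat \<Rightarrow> nat \<Rightarrow> (nat \<Rightarrow> nat) \<Rightarrow> 'd noise_idx set" where
  "noise_set k n m = {ClustN j c | j c. j < k} \<union> {ClientN i c | i c. i < n}
      \<union> {ObsN i r | i r. i < n \<and> r < m i}"

definition noise_sd :: "real \<Rightarrow> (nat \<Rightarrow> real) \<Rightarrow> (nat \<Rightarrow> real) \<Rightarrow> (nat \<Rightarrow> nat)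
    \<Rightarrow> 'd noise_idx \<Rightarrow> real" where
  "noise_sd sb sbj sig cl \<iota> = (case \<iota> of ClustN j c \<Rightarrow> sb | ClientN i c \<Rightarrow> sbj (cl i)
      | ObsN i r \<Rightarrow> sig i)"

definition cluster_param :: "real^'d \<Rightarrow> ('d::finite noise_idx \<Rightarrow> 'a \<Rightarrow> real) \<Rightarrow> nat \<Rightarrow> 'a \<Rightarrow> real^'d" where
  "cluster_param \<theta>0 g j \<omega> = \<theta>0 + (\<chi> c. g (ClustN j c) \<omega>)"

definition client_param :: "real^'d \<Rightarrow> (nat \<Rightarrow> nat) \<Rightarrow> ('d::finite noise_idx \<Rightarrow> 'a \<Rightarrow> real)
    \<Rightarrow> nat \<Rightarrow> 'a \<Rightarrow> real^'d" where
  "client_param \<theta>0 cl g i \<omega> = cluster_param \<theta>0 g (cl i) \<omega> + (\<chi> c. g (ClientN i c) \<omega>)"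

definition obs :: "(nat \<Rightarrow> nat \<Rightarrow> real^'d) \<Rightarrow> real^'d \<Rightarrow> (nat \<Rightarrow> nat)
    \<Rightarrow> ('d::finite noise_idx \<Rightarrow> 'a \<Rightarrow> real) \<Rightarrow> nat \<Rightarrow> 'a \<Rightarrow> nat \<Rightarrow> real" where
  "obs X \<theta>0 cl g i \<omega> r = X i r \<bullet> client_param \<theta>0 cl g i \<omega> + g (ObsN i r) \<omega>"

definition gram :: "(nat \<Rightarrow> nat \<Rightarrow> real^'d::finite) \<Rightarrow> (nat \<Rightarrow> nat) \<Rightarrow> nat \<Rightarrow> real^'d^'d" where
  "gram X m i = (\<chi> a b. \<Sum>r<m i. X i r $ a * X i r $ b)"

definition Xty :: "(nat \<Rightarrow> nat \<Rightarrow> real^'d::finite) \<Rightarrow> (nat \<Rightarrow> nat) \<Rightarrow> nat \<Rightarrow> (nat \<Rightarrow> real) \<Rightarrow> real^'d" where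
  "Xty X m i yi = (\<Sum>r<m i. yi r *\<^sub>R X i r)"

definition direct_est :: "(nat \<Rightarrow> nat \<Rightarrow> real^'d::finite) \<Rightarrow> (nat \<Rightarrow> nat) \<Rightarrow> nat \<Rightarrow> (nat \<Rightarrow> real) \<Rightarrow> real^'d" where
  "direct_est X m i yi = matrix_inv (gram X m i) *v Xty X m i yi"

definition sqres :: "(nat \<Rightarrow> nat \<Rightarrow> real^'d::finite) \<Rightarrow> (nat \<Rightarrow> nat) \<Rightarrow> nat \<Rightarrow> (nat \<Rightarrow> real) \<Rightarrow> real^'d \<Rightarrow> real" where
  "sqres X m i yi \<theta> = (\<Sum>r<m i. (yi r - X i r \<bullet> \<theta>)\<^sup>2)"

text \<open>The hierarchical objective; y i r is observation r of client i.\<close>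
definition objective :: "nat \<Rightarrow> nat \<Rightarrow> (nat \<Rightarrow> nat) \<Rightarrow> (nat \<Rightarrow> nat \<Rightarrow> real^'d::finite) \<Rightarrow> (nat \<Rightarrow> nat)
    \<Rightarrow> (nat \<Rightarrow> real) \<Rightarrow> (nat \<Rightarrow> real) \<Rightarrow> (nat \<Rightarrow> real) \<Rightarrow> (nat \<Rightarrow> nat \<Rightarrow> real)
    \<Rightarrow> (nat \<Rightarrow> real^'d) \<Rightarrow> (nat \<Rightarrow> real^'d) \<Rightarrow> real^'d \<Rightarrow> real" where
  "objective k n m X cl lam gam sig y \<theta> w wb =
     (\<Sum>j<k. lam j / 2 * (norm (w j - wb))\<^sup>2 +
        (\<Sum>i\<in>{i. i < n \<and> cl i = j}. sqres X m i (y i) (\<theta> i) / (2 * (sig i)\<^sup>2)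
             + gam i / 2 * (norm (\<theta> i - w j))\<^sup>2))"

definition hier_est :: "nat \<Rightarrow> nat \<Rightarrow> (nat \<Rightarrow> nat) \<Rightarrow> (nat \<Rightarrow> nat \<Rightarrow> real^'d::finite) \<Rightarrow> (nat \<Rightarrow> nat)
    \<Rightarrow> (nat \<Rightarrow> real) \<Rightarrow> (nat \<Rightarrow> real) \<Rightarrow> (nat \<Rightarrow> real) \<Rightarrow> (nat \<Rightarrow> nat \<Rightarrow> real) \<Rightarrow> nat \<Rightarrow> real^'d" where
  "hier_est k n m X cl lam gam sig y = (SOME \<theta>. \<exists>w wb. \<forall>\<theta>' w' wb'.
      objective k n m X cl lam gam sig y \<theta> w wb \<le> objective k n m X cl lam gam sig y \<theta>' w' wb')"

text \<open>A d x (m i + (n-1) d) matrix L is represented blockwise: L = (A | B_i' for i' \<noteq> i),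
  where A r (r < m i) is the r-th column of the first block and B i' is the d x d block
  acting on the component theta^d_i'. blk_apply computes L W_i, blk_times_Z computes L Z_i.\<close>
definition blk_apply :: "(nat \<Rightarrow> nat) \<Rightarrow> nat \<Rightarrow> nat \<Rightarrow> (nat \<Rightarrow> real^'d::finite) \<Rightarrow> (nat \<Rightarrow> real^'d^'d)
    \<Rightarrow> (nat \<Rightarrow> real) \<Rightarrow> (nat \<Rightarrow> real^'d) \<Rightarrow> real^'d" where
  "blk_apply m n i A B yi \<theta>d = (\<Sum>r<m i. yi r *\<^sub>R A r) + (\<Sum>i'\<in>{..<n} - {i}. B i' *v \<theta>d i')"

definition blk_times_Z :: "(nat \<Rightarrow> nat \<Rightarrow> real^'d::finite) \<Rightarrow> (nat \<Rightarrow> nat) \<Rightarrow> nat \<Rightarrow> nat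
    \<Rightarrow> (nat \<Rightarrow> real^'d) \<Rightarrow> (nat \<Rightarrow> real^'d^'d) \<Rightarrow> real^'d^'d" where
  "blk_times_Z X m n i A B = (\<chi> a b. \<Sum>r<m i. A r $ a * X i r $ b) + (\<Sum>i'\<in>{..<n} - {i}. B i')"

end

theory Submission
  imports Defs
begin

text \<open>Since every design is orthogonal, \<open>X\<^sub>i\<^sup>TX\<^sub>i = \<beta>\<^sub>i I\<close>, the objective is a sum of weighted squared
  distances to the direct estimates \<open>\<theta>\<^sup>d\<close>; completing the square client by client, cluster by cluster
  and finally for the global centre shows that the minimizer is unique and that \<open>\<theta>\<^sub>i\<close> is an explicit convex
  combination of \<open>\<theta>\<^sup>d\<^sub>1, \<dots>, \<theta>\<^sup>d\<^sub>n\<close>, i.e. a linear unbiased estimator \<open>L\<^sup>\<star> W\<^sub>i\<close>.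
  Every coordinate of the error \<open>L W\<^sub>i - \<theta>\<^sub>i\<^sup>*\<close> of a linear unbiased estimator is a linear form in the
  independent centred Gaussian noise coordinates, so its mean square is the covariance form \<open>cov\<close> of
  its coefficient vector. The Gauss-Markov step is that the error coefficients of \<open>L\<^sup>\<star>\<close> are
  \<open>cov\<close>-orthogonal to the coefficients of every \<open>D\<close> with \<open>D Z\<^sub>i = 0\<close>, so Pythagoras gives the inequality.\<close>

section \<open>Moments of independent centred Gaussians\<close>

lemma (in prob_space) normal_centered_moments:
  assumes dist: "distributed M lborel X (\<lambda>x. ennreal (normal_density 0 s x))" and pos: "s > 0"
  shows "integrable M X" "integrable M (\<lambda>\<omega>. (X \<omega>)\<^sup>2)"
    "(\<integral>\<omega>. X \<omega> \<partial>M) = 0" "(\<integral>\<omega>. (X \<omega>)\<^sup>2 \<partial>M) = s\<^sup>2"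
proof -
  have "integrable lborel (\<lambda>x. normal_density 0 s x * x)"
    using integrable_normal_moment_nz_1[OF pos] by simp
  then show "integrable M X"
    using distributed_integrable[OF dist, of "\<lambda>x. x"] by simp
  have "integrable lborel (\<lambda>x. normal_density 0 s x * x\<^sup>2)"
    using integrable_normal_moment[OF pos, of 0 2] by simp
  then show "integrable M (\<lambda>\<omega>. (X \<omega>)\<^sup>2)"
    using distributed_integrable[OF dist, of "\<lambda>x. x\<^sup>2"] by simp
  show "(\<integral>\<omega>. X \<omega> \<partial>M) = 0"
    using normal_distributed_expectation[OF pos dist] by simp
  have "(\<integral>x. normal_density 0 s x * x\<^sup>2 \<partial>lborel) = s\<^sup>2"
    using pos integral_normal_moment_even[of s 0 1] by (simp add: field_simps power2_eq_square)
  then show "(\<integral>\<omega>. (X \<omega>)\<^sup>2 \<partial>M) = s\<^sup>2"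
    using pos distributed_integral[OF dist, of "\<lambda>x. x\<^sup>2"] by simp
qed

lemma (in prob_space) indep_normal_integral_product:
  assumes ind: "indep_vars (\<lambda>_. borel) g N"
    and dist: "\<forall>\<iota>\<in>N. distributed M lborel (g \<iota>) (\<lambda>x. ennreal (normal_density 0 (sd \<iota>) x))"
    and pos: "\<forall>\<iota>\<in>N. sd \<iota> > 0" and mem: "\<iota> \<in> N" "\<iota>' \<in> N"
  shows "integrable M (\<lambda>\<omega>. g \<iota> \<omega> * g \<iota>' \<omega>)"
    "(\<integral>\<omega>. g \<iota> \<omega> * g \<iota>' \<omega> \<partial>M) = (if \<iota> = \<iota>' then (sd \<iota>)\<^sup>2 else 0)"
proof -
  have moments: "integrable M (g j)" "(\<integral>\<omega>. g j \<omega> \<partial>M) = 0"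
     "integrable M (\<lambda>\<omega>. (g j \<omega>)\<^sup>2)" "(\<integral>\<omega>. (g j \<omega>)\<^sup>2 \<partial>M) = (sd j)\<^sup>2" if "j \<in> N" for j
    using normal_centered_moments[of "g j" "sd j"] dist pos that by auto
  have "integrable M (\<lambda>\<omega>. g \<iota> \<omega> * g \<iota>' \<omega>) \<and>
      (\<integral>\<omega>. g \<iota> \<omega> * g \<iota>' \<omega> \<partial>M) = (if \<iota> = \<iota>' then (sd \<iota>)\<^sup>2 else 0)"
  proof (cases "\<iota> = \<iota>'")
    case True then show ?thesis using moments[OF mem(1)] by (simp add: power2_eq_square)
  next
    case False
    have ind2: "indep_vars (\<lambda>_. borel) g {\<iota>, \<iota>'}"
      using indep_vars_subset[OF ind] mem by auto
    have "(\<integral>\<omega>. (\<Prod>j\<in>{\<iota>,\<iota>'}. g j \<omega>) \<partial>M) = (\<Prod>j\<in>{\<iota>,\<iota>'}. \<integral>\<omega>. g j \<omega> \<partial>M)"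
      "integrable M (\<lambda>\<omega>. (\<Prod>j\<in>{\<iota>,\<iota>'}. g j \<omega>))"
      using indep_vars_lebesgue_integral[OF _ ind2] indep_vars_integrable[OF _ ind2] moments mem by auto
    then show ?thesis using False moments mem by simp
  qed
  then show "integrable M (\<lambda>\<omega>. g \<iota> \<omega> * g \<iota>' \<omega>)"
    "(\<integral>\<omega>. g \<iota> \<omega> * g \<iota>' \<omega> \<partial>M) = (if \<iota> = \<iota>' then (sd \<iota>)\<^sup>2 else 0)" by auto
qed

lemma (in prob_space) integral_square_indep_normal_sum:
  assumes fin: "finite N" and ind: "indep_vars (\<lambda>_. borel) g N"
    and dist: "\<forall>\<iota>\<in>N. distributed M lborel (g \<iota>) (\<lambda>x. ennreal (normal_density 0 (sd \<iota>) x))"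
    and pos: "\<forall>\<iota>\<in>N. sd \<iota> > 0"
  shows "integrable M (\<lambda>\<omega>. (\<Sum>\<iota>\<in>N. \<alpha> \<iota> * g \<iota> \<omega>)\<^sup>2)"
    "(\<integral>\<omega>. (\<Sum>\<iota>\<in>N. \<alpha> \<iota> * g \<iota> \<omega>)\<^sup>2 \<partial>M) = (\<Sum>\<iota>\<in>N. (\<alpha> \<iota>)\<^sup>2 * (sd \<iota>)\<^sup>2)"
proof -
  note prod = indep_normal_integral_product[OF ind dist pos]
  have expand: "(\<Sum>\<iota>\<in>N. \<alpha> \<iota> * g \<iota> \<omega>)\<^sup>2 = (\<Sum>\<iota>\<in>N. \<Sum>\<iota>'\<in>N. (\<alpha> \<iota> * \<alpha> \<iota>') * (g \<iota> \<omega> * g \<iota>' \<omega>))" for \<omega>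
    by (simp add: power2_eq_square sum_product algebra_simps)
  show "integrable M (\<lambda>\<omega>. (\<Sum>\<iota>\<in>N. \<alpha> \<iota> * g \<iota> \<omega>)\<^sup>2)"
    unfolding expand using prod by (intro Bochner_Integration.integrable_sum integrable_mult_right) auto
  have "(\<integral>\<omega>. (\<Sum>\<iota>\<in>N. \<alpha> \<iota> * g \<iota> \<omega>)\<^sup>2 \<partial>M)
      = (\<Sum>\<iota>\<in>N. \<Sum>\<iota>'\<in>N. (\<alpha> \<iota> * \<alpha> \<iota>') * (if \<iota> = \<iota>' then (sd \<iota>)\<^sup>2 else 0))"
    unfolding expand using prod by (simp add: Bochner_Integration.integral_sum Bochner_Integration.integrable_sum)
  also have "\<dots> = (\<Sum>\<iota>\<in>N. (\<alpha> \<iota>)\<^sup>2 * (sd \<iota>)\<^sup>2)"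
    using fin by (simp add: if_distrib power2_eq_square cong: if_cong)
  finally show "(\<integral>\<omega>. (\<Sum>\<iota>\<in>N. \<alpha> \<iota> * g \<iota> \<omega>)\<^sup>2 \<partial>M) = (\<Sum>\<iota>\<in>N. (\<alpha> \<iota>)\<^sup>2 * (sd \<iota>)\<^sup>2)" .
qed

lemma if_conj_zero: "(if P \<and> Q then x else (0::real)) = (if P then (if Q then x else 0) else 0)"
  by simp

lemma sum_if_zero: "(\<Sum>x\<in>S. if P then f x else (0::real)) = (if P then sum f S else 0)"
  by simp

lemma inner_real_vec: "x \<bullet> (y::real^'d::finite) = (\<Sum>b\<in>UNIV. x $ b * y $ b)"
  by (simp add: inner_vec_def)

lemma weighted_sq_dist_two_points:
  fixes v c1 c2 :: "'v::real_inner"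
  assumes "p1 + p2 \<noteq> 0"
  shows "p1 * (norm (v - c1))\<^sup>2 + p2 * (norm (v - c2))\<^sup>2 =
    (p1 + p2) * (norm (v - (1 / (p1 + p2)) *\<^sub>R (p1 *\<^sub>R c1 + p2 *\<^sub>R c2)))\<^sup>2
    + (p1 * p2 / (p1 + p2)) * (norm (c1 - c2))\<^sup>2"
proof -
  define s where "s = p1 + p2"
  have s: "s \<noteq> 0" using assms s_def by simp
  have e: "v - (1 / s) *\<^sub>R (p1 *\<^sub>R c1 + p2 *\<^sub>R c2) = (1/s) *\<^sub>R (s *\<^sub>R v - p1 *\<^sub>R c1 - p2 *\<^sub>R c2)"
    using s by (simp add: algebra_simps)
  have "(norm ((1/s) *\<^sub>R (s *\<^sub>R v - p1 *\<^sub>R c1 - p2 *\<^sub>R c2)))\<^sup>2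
     = (1/s)\<^sup>2 * (norm (s *\<^sub>R v - p1 *\<^sub>R c1 - p2 *\<^sub>R c2))\<^sup>2"
    by (simp add: power_divide power2_abs)
  moreover have "s * ((1/s)\<^sup>2 * X) = X / s" for X using s by (simp add: power2_eq_square)
  ultimately have 1: "s * (norm (v - (1 / s) *\<^sub>R (p1 *\<^sub>R c1 + p2 *\<^sub>R c2)))\<^sup>2
     = (norm (s *\<^sub>R v - p1 *\<^sub>R c1 - p2 *\<^sub>R c2))\<^sup>2 / s" unfolding e by simp
  have "s * (p1 * (norm (v - c1))\<^sup>2 + p2 * (norm (v - c2))\<^sup>2) =
      (norm (s *\<^sub>R v - p1 *\<^sub>R c1 - p2 *\<^sub>R c2))\<^sup>2 + (p1 * p2) * (norm (c1 - c2))\<^sup>2"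
    unfolding power2_norm_eq_inner s_def
    by (simp add: inner_diff_left inner_diff_right inner_add_left inner_add_right inner_commute algebra_simps)
  then have "p1 * (norm (v - c1))\<^sup>2 + p2 * (norm (v - c2))\<^sup>2 =
      (norm (s *\<^sub>R v - p1 *\<^sub>R c1 - p2 *\<^sub>R c2))\<^sup>2 / s + (p1 * p2 / s) * (norm (c1 - c2))\<^sup>2"
    using s by (simp add: field_simps)
  then show ?thesis using 1 by (simp add: s_def)
qed

lemma weighted_sq_dist_decomp:
  fixes c :: "'k \<Rightarrow> 'v::real_inner"
  assumes fin: "finite K" and P: "(\<Sum>j\<in>K. p j) \<noteq> 0"
  defines "mm \<equiv> (1 / (\<Sum>j\<in>K. p j)) *\<^sub>R (\<Sum>j\<in>K. p j *\<^sub>R c j)"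
  shows "(\<Sum>j\<in>K. p j * (norm (v - c j))\<^sup>2) =
     (\<Sum>j\<in>K. p j) * (norm (v - mm))\<^sup>2 + (\<Sum>j\<in>K. p j * (norm (mm - c j))\<^sup>2)"
proof -
  define PP where "PP = (\<Sum>j\<in>K. p j)"
  have Pm: "PP *\<^sub>R mm = (\<Sum>j\<in>K. p j *\<^sub>R c j)" using P unfolding mm_def PP_def by simp
  have eq: "(norm (v - c j))\<^sup>2 = (norm (v - mm))\<^sup>2 + 2 * inner (v - mm) (mm - c j) + (norm (mm - c j))\<^sup>2" for j
  proof -
    have "v - c j = (v - mm) + (mm - c j)" by simp
    then show ?thesis by (metis power2_norm_eq_inner inner_add_left inner_add_right inner_commute mult_2 add.assoc)
  qed
  have cross: "(\<Sum>j\<in>K. p j * inner (v - mm) (mm - c j)) = 0"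
  proof -
    have "(\<Sum>j\<in>K. p j * inner (v - mm) (mm - c j)) = inner (v - mm) (\<Sum>j\<in>K. p j *\<^sub>R (mm - c j))"
      by (simp add: inner_sum_right)
    also have "(\<Sum>j\<in>K. p j *\<^sub>R (mm - c j)) = PP *\<^sub>R mm - (\<Sum>j\<in>K. p j *\<^sub>R c j)"
      by (simp add: PP_def scaleR_diff_right sum_subtractf scaleR_sum_left)
    finally show ?thesis using Pm by simp
  qed
  have "(\<Sum>j\<in>K. p j * (norm (v - c j))\<^sup>2) = (\<Sum>j\<in>K. p j * (norm (v - mm))\<^sup>2 + 2 * (p j * inner (v - mm) (mm - c j)) + p j * (norm (mm - c j))\<^sup>2)"
    by (rule sum.cong) (auto simp: eq algebra_simps)
  also have "\<dots> = PP * (norm (v - mm))\<^sup>2 + 2 * (\<Sum>j\<in>K. p j * inner (v - mm) (mm - c j)) + (\<Sum>j\<in>K. p j * (norm (mm - c j))\<^sup>2)"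
    by (simp add: sum.distrib sum_distrib_left sum_distrib_right PP_def)
  finally show ?thesis using cross by (simp add: PP_def)
qed

section \<open>Orthogonal designs\<close>

lemma matrix_inv_scaleR_mat1:
  assumes "b \<noteq> 0"
  shows "matrix_inv ((b::real) *\<^sub>R (mat 1 :: real^'n^'n)) = (1/b) *\<^sub>R mat 1"
proof -
  let ?A = "(b::real) *\<^sub>R (mat 1 :: real^'n^'n)"
  have ex: "\<exists>A'. ?A ** A' = mat 1 \<and> A' ** ?A = mat 1"
    by (rule exI[of _ "(1/b) *\<^sub>R mat 1"]) (use assms in \<open>simp add: scalar_matrix_assoc[symmetric] matrix_scalar_ac\<close>)
  then have "?A ** matrix_inv ?A = mat 1 \<and> matrix_inv ?A ** ?A = mat 1"
    unfolding matrix_inv_def by (rule someI_ex)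
  then have "matrix_inv ?A ** ?A = mat 1" by simp
  then have "b *\<^sub>R matrix_inv ?A = mat 1" by (simp add: matrix_scalar_ac)
  then have "(1/b) *\<^sub>R (b *\<^sub>R matrix_inv ?A) = (1/b) *\<^sub>R mat 1" by simp
  then show ?thesis using assms by simp
qed

lemma sum_sq_inner_rows_gram:
  fixes X :: "nat \<Rightarrow> nat \<Rightarrow> real^'d::finite"
  shows "(\<Sum>r<m i. (X i r \<bullet> \<theta>)\<^sup>2) = \<theta> \<bullet> (gram X m i *v \<theta>)"
proof -
  have "\<theta> \<bullet> (gram X m i *v \<theta>) = (\<Sum>a\<in>UNIV. \<theta> $ a * (\<Sum>b\<in>UNIV. (\<Sum>r<m i. X i r $ a * X i r $ b) * \<theta> $ b))"
    by (simp add: inner_vec_def gram_def matrix_vector_mult_def)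
  also have "\<dots> = (\<Sum>r<m i. (\<Sum>a\<in>UNIV. X i r $ a * \<theta> $ a) * (\<Sum>b\<in>UNIV. X i r $ b * \<theta> $ b))"
    by (simp add: sum_distrib_left sum_distrib_right algebra_simps)
      (subst sum.swap, rule sum.cong, simp, subst sum.swap, simp)
  also have "\<dots> = (\<Sum>r<m i. (X i r \<bullet> \<theta>)\<^sup>2)"
    by (simp add: inner_vec_def power2_eq_square)
  finally show ?thesis by simp
qed

lemma sum_inner_rows_Xty:
  fixes X :: "nat \<Rightarrow> nat \<Rightarrow> real^'d::finite"
  shows "(\<Sum>r<m i. yi r * (X i r \<bullet> \<theta>)) = \<theta> \<bullet> Xty X m i yi"
  by (simp add: Xty_def inner_sum_right sum_distrib_left inner_commute)

lemma direct_est_orthogonal_design: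
  assumes "b \<noteq> 0" and "gram X m i = b *\<^sub>R mat 1"
  shows "direct_est X m i yi = (1 / b) *\<^sub>R Xty X m i yi"
  using assms unfolding direct_est_def
  by (simp add: matrix_inv_scaleR_mat1 scaleR_matrix_vector_assoc[symmetric])

lemma sqres_orthogonal_design:
  fixes X :: "nat \<Rightarrow> nat \<Rightarrow> real^'d::finite"
  assumes b: "b > 0" and g: "gram X m i = b *\<^sub>R mat 1"
  shows "sqres X m i yi \<theta> = b * (norm (\<theta> - direct_est X m i yi))\<^sup>2
      + ((\<Sum>r<m i. (yi r)\<^sup>2) - b * (norm (direct_est X m i yi))\<^sup>2)"
proof -
  define t where "t = direct_est X m i yi"
  have "direct_est X m i yi = (1 / b) *\<^sub>R Xty X m i yi"
    using b g by (intro direct_est_orthogonal_design) auto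
  then have t: "Xty X m i yi = b *\<^sub>R t" unfolding t_def using b by simp
  have "sqres X m i yi \<theta> = (\<Sum>r<m i. (yi r)\<^sup>2) - 2 * (\<Sum>r<m i. yi r * (X i r \<bullet> \<theta>)) + (\<Sum>r<m i. (X i r \<bullet> \<theta>)\<^sup>2)"
    by (simp add: sqres_def power2_diff sum_subtractf sum.distrib sum_distrib_left algebra_simps)
  also have "\<dots> = (\<Sum>r<m i. (yi r)\<^sup>2) - 2 * b * (\<theta> \<bullet> t) + b * (\<theta> \<bullet> \<theta>)"
    unfolding sum_sq_inner_rows_gram sum_inner_rows_Xty t g by (simp add: algebra_simps scaleR_matrix_vector_assoc[symmetric])
  also have "\<dots> = b * (norm (\<theta> - t))\<^sup>2 + ((\<Sum>r<m i. (yi r)\<^sup>2) - b * (norm t)\<^sup>2)"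
    by (simp add: power2_norm_eq_inner inner_diff_left inner_diff_right inner_commute algebra_simps)
  finally show ?thesis by (simp add: t_def)
qed

section \<open>The minimizer of the hierarchical objective\<close>

locale hier_model =
  fixes n k :: nat and cl m :: "nat \<Rightarrow> nat" and X :: "nat \<Rightarrow> nat \<Rightarrow> real^'d::finite"
    and sb :: real and sbj sig \<beta> :: "nat \<Rightarrow> real"
  assumes n_pos: "0 < n" and cl_lt: "\<forall>i'<n. cl i' < k" and cl_ne: "\<forall>j<k. \<exists>i'<n. cl i' = j"
    and sb_pos: "sb > 0" and sbj_pos: "\<forall>j<k. sbj j > 0" and sig_pos: "\<forall>i'<n. sig i' > 0"
    and gram_eq: "\<forall>i'<n. \<beta> i' > 0 \<and> gram X m i' = \<beta> i' *\<^sub>R mat 1"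
begin

definition "lam = 1 / sb\<^sup>2"
definition "gam i' = 1 / (sbj (cl i'))\<^sup>2"
definition "obs_prec i' = \<beta> i' / (sig i')\<^sup>2"
definition "client_prec i' = obs_prec i' * gam i' / (obs_prec i' + gam i')"
definition "cluster j = {x \<in> {..<n}. cl x = j}"
definition "cluster_prec j = (\<Sum>i'\<in>cluster j. client_prec i')"
definition "cluster_weight j = lam * cluster_prec j / (lam + cluster_prec j)"
definition "total_weight = (\<Sum>j<k. cluster_weight j)"
definition cluster_sum :: "nat \<Rightarrow> (nat \<Rightarrow> real^'d) \<Rightarrow> real^'d" where "cluster_sum j t = (\<Sum>i'\<in>cluster j. client_prec i' *\<^sub>R t i')"
definition cluster_mean :: "nat \<Rightarrow> (nat \<Rightarrow> real^'d) \<Rightarrow> real^'d" where "cluster_mean j t = (1 / cluster_prec j) *\<^sub>R cluster_sum j t"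
definition global_fit :: "(nat \<Rightarrow> real^'d) \<Rightarrow> real^'d" where "global_fit t = (1 / total_weight) *\<^sub>R (\<Sum>j<k. cluster_weight j *\<^sub>R cluster_mean j t)"
definition cluster_fit_at :: "nat \<Rightarrow> real^'d \<Rightarrow> (nat \<Rightarrow> real^'d) \<Rightarrow> real^'d" where
  "cluster_fit_at j wb t = (1 / (lam + cluster_prec j)) *\<^sub>R (lam *\<^sub>R wb + cluster_sum j t)"
definition client_fit_at :: "nat \<Rightarrow> real^'d \<Rightarrow> (nat \<Rightarrow> real^'d) \<Rightarrow> real^'d" where
  "client_fit_at i' w t = (1 / (obs_prec i' + gam i')) *\<^sub>R (obs_prec i' *\<^sub>R t i' + gam i' *\<^sub>R w)"
definition cluster_fit :: "nat \<Rightarrow> (nat \<Rightarrow> real^'d) \<Rightarrow> real^'d" where "cluster_fit j t = cluster_fit_at j (global_fit t) t"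
definition client_fit :: "nat \<Rightarrow> (nat \<Rightarrow> real^'d) \<Rightarrow> real^'d" where "client_fit i' t = client_fit_at i' (cluster_fit (cl i') t) t"

text \<open>The argument \<open>t\<close> of the fits stands for the vector of direct estimates \<open>\<theta>\<^sup>d\<close>;
  \<open>client_fit_at i w t\<close> and \<open>cluster_fit_at j w\<^sub>b t\<close> minimise the objective in \<open>\<theta>\<^sub>i\<close>
  resp. \<open>w\<^sub>j\<close> for fixed parameters one level up.\<close>

lemma lam_pos: "lam > 0" using sb_pos by (simp add: lam_def)
lemma gam_pos: "i' < n \<Longrightarrow> gam i' > 0"
proof -
  assume "i' < n" then have "sbj (cl i') > 0" using sbj_pos cl_lt by auto
  then show ?thesis by (simp add: gam_def)
qed
lemma obs_prec_pos: "i' < n \<Longrightarrow> obs_prec i' > 0"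
proof -
  assume "i' < n" then have "sig i' > 0" "\<beta> i' > 0" using sig_pos gram_eq by auto
  then show ?thesis by (simp add: obs_prec_def)
qed
lemma client_prec_pos: "i' < n \<Longrightarrow> client_prec i' > 0"
proof -
  assume "i' < n" then have "obs_prec i' > 0" "gam i' > 0" using obs_prec_pos gam_pos by auto
  then show ?thesis by (simp add: client_prec_def)
qed
lemma finite_cluster: "finite (cluster j)" by (simp add: cluster_def)
lemma cluster_lt: "i' \<in> cluster j \<Longrightarrow> i' < n" by (simp add: cluster_def)
lemma cluster_nonempty: "j < k \<Longrightarrow> cluster j \<noteq> {}" using cl_ne by (auto simp: cluster_def)
lemma cluster_prec_pos: "j < k \<Longrightarrow> cluster_prec j > 0"
  unfolding cluster_prec_def using cluster_nonempty finite_cluster client_prec_pos cluster_lt by (intro sum_pos) auto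
lemma cluster_weight_pos: "j < k \<Longrightarrow> cluster_weight j > 0"
proof -
  assume "j < k" then have "cluster_prec j > 0" using cluster_prec_pos by auto
  then show ?thesis using lam_pos by (simp add: cluster_weight_def)
qed
lemma k_pos: "0 < k" using n_pos cl_lt by auto
lemma total_weight_pos: "total_weight > 0" unfolding total_weight_def using cluster_weight_pos k_pos by (intro sum_pos) auto
lemma Collect_cluster_eq: "{i. i < n \<and> cl i = j} = cluster j" by (auto simp: cluster_def)

lemma sum_over_clusters: "(\<Sum>j<k. \<Sum>i'\<in>cluster j. f i') = (\<Sum>i'<n. f i')"
  unfolding cluster_def using cl_lt by (intro sum.group) auto

lemma client_term_decomp:
  assumes "i' < n" and t: "t i' = direct_est X m i' yi"
  shows "sqres X m i' yi \<theta> / (2 * (sig i')\<^sup>2) + gam i' / 2 * (norm (\<theta> - w))\<^sup>2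
    = (obs_prec i' + gam i') / 2 * (norm (\<theta> - client_fit_at i' w t))\<^sup>2 + client_prec i' / 2 * (norm (w - t i'))\<^sup>2
      + ((\<Sum>r<m i'. (yi r)\<^sup>2) - \<beta> i' * (norm (t i'))\<^sup>2) / (2 * (sig i')\<^sup>2)"
proof -
  have b: "\<beta> i' > 0" "gram X m i' = \<beta> i' *\<^sub>R mat 1" using gram_eq assms(1) by auto
  have s: "sig i' > 0" using sig_pos assms(1) by auto
  have sq: "sqres X m i' yi \<theta> / (2 * (sig i')\<^sup>2) = obs_prec i' / 2 * (norm (\<theta> - t i'))\<^sup>2
     + ((\<Sum>r<m i'. (yi r)\<^sup>2) - \<beta> i' * (norm (t i'))\<^sup>2) / (2 * (sig i')\<^sup>2)"
    unfolding sqres_orthogonal_design[OF b] t[symmetric] obs_prec_def using s by (simp add: field_simps)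
  have tp: "obs_prec i' * (norm (\<theta> - t i'))\<^sup>2 + gam i' * (norm (\<theta> - w))\<^sup>2 =
      (obs_prec i' + gam i') * (norm (\<theta> - client_fit_at i' w t))\<^sup>2 + client_prec i' * (norm (w - t i'))\<^sup>2"
    using weighted_sq_dist_two_points[of "obs_prec i'" "gam i'" \<theta> "t i'" w] obs_prec_pos[OF assms(1)] gam_pos[OF assms(1)]
    unfolding client_fit_at_def client_prec_def by (simp add: norm_minus_commute)
  show ?thesis using sq tp by (simp add: field_simps)
qed

lemma cluster_term_decomp:
  assumes "j < k"
  shows "lam / 2 * (norm (w - wb))\<^sup>2 + (\<Sum>i'\<in>cluster j. client_prec i' / 2 * (norm (w - t i'))\<^sup>2)
     = (lam + cluster_prec j) / 2 * (norm (w - cluster_fit_at j wb t))\<^sup>2 + cluster_weight j / 2 * (norm (wb - cluster_mean j t))\<^sup>2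
       + (\<Sum>i'\<in>cluster j. client_prec i' / 2 * (norm (cluster_mean j t - t i'))\<^sup>2)"
proof -
  have H: "cluster_prec j > 0" using cluster_prec_pos assms by simp
  have w1: "(\<Sum>i'\<in>cluster j. client_prec i' * (norm (w - t i'))\<^sup>2) = cluster_prec j * (norm (w - cluster_mean j t))\<^sup>2
      + (\<Sum>i'\<in>cluster j. client_prec i' * (norm (cluster_mean j t - t i'))\<^sup>2)"
    using weighted_sq_dist_decomp[OF finite_cluster, where p=client_prec and v=w and c=t] H unfolding cluster_mean_def cluster_sum_def cluster_prec_def by simp
  have HT: "cluster_prec j *\<^sub>R cluster_mean j t = cluster_sum j t" using H by (simp add: cluster_mean_def)
  have w2: "lam * (norm (w - wb))\<^sup>2 + cluster_prec j * (norm (w - cluster_mean j t))\<^sup>2 =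
     (lam + cluster_prec j) * (norm (w - cluster_fit_at j wb t))\<^sup>2 + cluster_weight j * (norm (wb - cluster_mean j t))\<^sup>2"
    using weighted_sq_dist_two_points[of lam "cluster_prec j" w wb "cluster_mean j t"] lam_pos H unfolding cluster_fit_at_def cluster_weight_def HT by simp
  have "(\<Sum>i'\<in>cluster j. client_prec i' / 2 * (norm (w - t i'))\<^sup>2) = (\<Sum>i'\<in>cluster j. client_prec i' * (norm (w - t i'))\<^sup>2) / 2"
    by (simp add: sum_divide_distrib)
  moreover have "(\<Sum>i'\<in>cluster j. client_prec i' / 2 * (norm (cluster_mean j t - t i'))\<^sup>2) = (\<Sum>i'\<in>cluster j. client_prec i' * (norm (cluster_mean j t - t i'))\<^sup>2) / 2"
    by (simp add: sum_divide_distrib)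
  ultimately show ?thesis using w1 w2 by (simp add: field_simps)
qed

lemma global_term_decomp:
  "(\<Sum>j<k. cluster_weight j / 2 * (norm (wb - cluster_mean j t))\<^sup>2) = total_weight / 2 * (norm (wb - global_fit t))\<^sup>2
     + (\<Sum>j<k. cluster_weight j / 2 * (norm (global_fit t - cluster_mean j t))\<^sup>2)"
proof -
  have "(\<Sum>j<k. cluster_weight j * (norm (wb - cluster_mean j t))\<^sup>2) = total_weight * (norm (wb - global_fit t))\<^sup>2
     + (\<Sum>j<k. cluster_weight j * (norm (global_fit t - cluster_mean j t))\<^sup>2)"
    using weighted_sq_dist_decomp[where K="{..<k}" and p=cluster_weight and v=wb and c="\<lambda>j. cluster_mean j t"] total_weight_pos unfolding global_fit_def total_weight_def by simp
  then show ?thesis by (simp add: sum_divide_distrib[symmetric] field_simps)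
qed

definition excess :: "(nat \<Rightarrow> real^'d) \<Rightarrow> (nat \<Rightarrow> real^'d) \<Rightarrow> real^'d \<Rightarrow> (nat \<Rightarrow> real^'d) \<Rightarrow> real" where
  "excess \<theta> w wb t = (\<Sum>j<k. \<Sum>i'\<in>cluster j. (obs_prec i' + gam i') / 2 * (norm (\<theta> i' - client_fit_at i' (w j) t))\<^sup>2)
     + (\<Sum>j<k. (lam + cluster_prec j) / 2 * (norm (w j - cluster_fit_at j wb t))\<^sup>2) + total_weight / 2 * (norm (wb - global_fit t))\<^sup>2"

definition residual :: "(nat \<Rightarrow> nat \<Rightarrow> real) \<Rightarrow> (nat \<Rightarrow> real^'d) \<Rightarrow> real" where
  "residual y t = (\<Sum>j<k. \<Sum>i'\<in>cluster j. ((\<Sum>r<m i'. (y i' r)\<^sup>2) - \<beta> i' * (norm (t i'))\<^sup>2) / (2 * (sig i')\<^sup>2))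
     + (\<Sum>j<k. \<Sum>i'\<in>cluster j. client_prec i' / 2 * (norm (cluster_mean j t - t i'))\<^sup>2)
     + (\<Sum>j<k. cluster_weight j / 2 * (norm (global_fit t - cluster_mean j t))\<^sup>2)"

lemma objective_decomp:
  assumes t: "\<forall>i'<n. t i' = direct_est X m i' (y i')"
  shows "objective k n m X cl (\<lambda>_. 1 / sb\<^sup>2) (\<lambda>i'. 1 / (sbj (cl i'))\<^sup>2) sig y \<theta> w wb = excess \<theta> w wb t + residual y t"
proof -
  define K where "K i' = ((\<Sum>r<m i'. (y i' r)\<^sup>2) - \<beta> i' * (norm (t i'))\<^sup>2) / (2 * (sig i')\<^sup>2)" for i'
  have "objective k n m X cl (\<lambda>_. 1 / sb\<^sup>2) (\<lambda>i'. 1 / (sbj (cl i'))\<^sup>2) sig y \<theta> w wb =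
     (\<Sum>j<k. lam / 2 * (norm (w j - wb))\<^sup>2 + (\<Sum>i'\<in>cluster j. sqres X m i' (y i') (\<theta> i') / (2 * (sig i')\<^sup>2)
        + gam i' / 2 * (norm (\<theta> i' - w j))\<^sup>2))"
    by (simp add: objective_def Collect_cluster_eq lam_def gam_def)
  also have "\<dots> = (\<Sum>j<k. lam / 2 * (norm (w j - wb))\<^sup>2 + (\<Sum>i'\<in>cluster j.
       (obs_prec i' + gam i') / 2 * (norm (\<theta> i' - client_fit_at i' (w j) t))\<^sup>2 + client_prec i' / 2 * (norm (w j - t i'))\<^sup>2 + K i'))"
  proof (rule sum.cong[OF refl])
    fix j assume "j \<in> {..<k}"
    show "lam / 2 * (norm (w j - wb))\<^sup>2 + (\<Sum>i'\<in>cluster j. sqres X m i' (y i') (\<theta> i') / (2 * (sig i')\<^sup>2)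
        + gam i' / 2 * (norm (\<theta> i' - w j))\<^sup>2) = lam / 2 * (norm (w j - wb))\<^sup>2 + (\<Sum>i'\<in>cluster j.
       (obs_prec i' + gam i') / 2 * (norm (\<theta> i' - client_fit_at i' (w j) t))\<^sup>2 + client_prec i' / 2 * (norm (w j - t i'))\<^sup>2 + K i')"
    proof (rule arg_cong[where f="\<lambda>x. _ + x"], rule sum.cong[OF refl])
      fix i' assume "i' \<in> cluster j"
      then have "i' < n" by (rule cluster_lt)
      then show "sqres X m i' (y i') (\<theta> i') / (2 * (sig i')\<^sup>2) + gam i' / 2 * (norm (\<theta> i' - w j))\<^sup>2 =
        (obs_prec i' + gam i') / 2 * (norm (\<theta> i' - client_fit_at i' (w j) t))\<^sup>2 + client_prec i' / 2 * (norm (w j - t i'))\<^sup>2 + K i'"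
        unfolding K_def using t by (intro client_term_decomp) auto
    qed
  qed
  also have "\<dots> = (\<Sum>j<k. (\<Sum>i'\<in>cluster j. (obs_prec i' + gam i') / 2 * (norm (\<theta> i' - client_fit_at i' (w j) t))\<^sup>2)
       + (lam / 2 * (norm (w j - wb))\<^sup>2 + (\<Sum>i'\<in>cluster j. client_prec i' / 2 * (norm (w j - t i'))\<^sup>2)) + (\<Sum>i'\<in>cluster j. K i'))"
    by (intro sum.cong refl) (simp add: sum.distrib)
  also have "\<dots> = (\<Sum>j<k. (\<Sum>i'\<in>cluster j. (obs_prec i' + gam i') / 2 * (norm (\<theta> i' - client_fit_at i' (w j) t))\<^sup>2)
       + ((lam + cluster_prec j) / 2 * (norm (w j - cluster_fit_at j wb t))\<^sup>2 + cluster_weight j / 2 * (norm (wb - cluster_mean j t))\<^sup>2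
       + (\<Sum>i'\<in>cluster j. client_prec i' / 2 * (norm (cluster_mean j t - t i'))\<^sup>2)) + (\<Sum>i'\<in>cluster j. K i'))"
    using cluster_term_decomp by (intro sum.cong refl) simp
  also have "\<dots> = (\<Sum>j<k. \<Sum>i'\<in>cluster j. (obs_prec i' + gam i') / 2 * (norm (\<theta> i' - client_fit_at i' (w j) t))\<^sup>2)
       + (\<Sum>j<k. (lam + cluster_prec j) / 2 * (norm (w j - cluster_fit_at j wb t))\<^sup>2) + (\<Sum>j<k. cluster_weight j / 2 * (norm (wb - cluster_mean j t))\<^sup>2)
       + (\<Sum>j<k. \<Sum>i'\<in>cluster j. client_prec i' / 2 * (norm (cluster_mean j t - t i'))\<^sup>2) + (\<Sum>j<k. \<Sum>i'\<in>cluster j. K i')"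
    by (simp add: sum.distrib)
  also have "\<dots> = excess \<theta> w wb t + residual y t"
  proof -
    have ac: "a + b + c + d + e = (a + b + q) + (e + d + f)" if "c = q + f" for a b c d e q f :: real
      using that by simp
    show ?thesis unfolding excess_def residual_def K_def by (rule ac[OF global_term_decomp])
  qed
  finally show ?thesis .
qed

lemma excess_terms_nonneg:
  "\<And>j i'. i' \<in> cluster j \<Longrightarrow> (obs_prec i' + gam i') / 2 * (norm (\<theta> i' - client_fit_at i' (w j) t))\<^sup>2 \<ge> 0"
  "\<And>j. j < k \<Longrightarrow> (lam + cluster_prec j) / 2 * (norm (w j - cluster_fit_at j wb t))\<^sup>2 \<ge> 0"
  "total_weight / 2 * (norm (wb - global_fit t))\<^sup>2 \<ge> 0"
proof -
  fix j i' assume "i' \<in> cluster j"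
  then have "obs_prec i' > 0" "gam i' > 0" using obs_prec_pos gam_pos cluster_lt by auto
  then show "(obs_prec i' + gam i') / 2 * (norm (\<theta> i' - client_fit_at i' (w j) t))\<^sup>2 \<ge> 0" by simp
next
  fix j assume "j < k"
  then have "cluster_prec j > 0" using cluster_prec_pos by auto
  then show "(lam + cluster_prec j) / 2 * (norm (w j - cluster_fit_at j wb t))\<^sup>2 \<ge> 0" using lam_pos by simp
next
  show "total_weight / 2 * (norm (wb - global_fit t))\<^sup>2 \<ge> 0" using total_weight_pos by simp
qed

lemma excess_nonneg: "excess \<theta> w wb t \<ge> 0"
  unfolding excess_def
  by (intro add_nonneg_nonneg sum_nonneg excess_terms_nonneg) auto

lemma excess_at_fit:
  assumes "\<forall>i'<n. \<theta>' i' = client_fit i' t"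
  shows "excess \<theta>' (\<lambda>j. cluster_fit j t) (global_fit t) t = 0"
proof -
  have "\<theta>' i' - client_fit_at i' (cluster_fit j t) t = 0" if "i' \<in> cluster j" for i' j
  proof -
    have "i' < n" "cl i' = j" using that by (auto simp: cluster_def)
    then show ?thesis using assms by (simp add: client_fit_def)
  qed
  then have 1: "(\<Sum>j<k. \<Sum>i'\<in>cluster j. (obs_prec i' + gam i') / 2 * (norm (\<theta>' i' - client_fit_at i' (cluster_fit j t) t))\<^sup>2) = 0"
    by (intro sum.neutral ballI) simp
  show ?thesis unfolding excess_def 1 by (simp add: cluster_fit_def)
qed

lemma excess_nonpos_imp_client_fit:
  assumes le: "excess \<theta> w wb t \<le> 0" and i: "i' < n"
  shows "\<theta> i' = client_fit i' t"
proof -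
  let ?A = "\<lambda>j. \<Sum>i'\<in>cluster j. (obs_prec i' + gam i') / 2 * (norm (\<theta> i' - client_fit_at i' (w j) t))\<^sup>2"
  let ?B = "\<lambda>j. (lam + cluster_prec j) / 2 * (norm (w j - cluster_fit_at j wb t))\<^sup>2"
  have nA: "\<forall>j\<in>{..<k}. ?A j \<ge> 0" by (intro ballI sum_nonneg excess_terms_nonneg)
  have nB: "\<forall>j\<in>{..<k}. ?B j \<ge> 0" by (intro ballI excess_terms_nonneg) simp
  have nn1: "sum ?A {..<k} \<ge> 0" by (rule sum_nonneg) (use nA in blast)
  have nn2: "sum ?B {..<k} \<ge> 0" by (rule sum_nonneg) (use nB in blast)
  have nn3: "total_weight / 2 * (norm (wb - global_fit t))\<^sup>2 \<ge> 0" by (rule excess_terms_nonneg)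
  have z1: "sum ?A {..<k} = 0" and z2: "sum ?B {..<k} = 0" and z3: "total_weight / 2 * (norm (wb - global_fit t))\<^sup>2 = 0"
    using le nn1 nn2 nn3 unfolding excess_def by linarith+
  have wb: "wb = global_fit t" using z3 total_weight_pos by simp
  have j: "cl i' < k" using cl_lt i by auto
  have "\<forall>j\<in>{..<k}. ?B j = 0" using sum_nonneg_eq_0_iff[of "{..<k}" ?B] z2 nB by blast
  then have "?B (cl i') = 0" using j by blast
  then have w: "w (cl i') = cluster_fit (cl i') t" using lam_pos cluster_prec_pos[OF j] wb by (simp add: cluster_fit_def)
  have "\<forall>j\<in>{..<k}. ?A j = 0" using sum_nonneg_eq_0_iff[of "{..<k}" ?A] z1 nA by blast
  then have "?A (cl i') = 0" using j by blast
  moreover have "\<forall>i''\<in>cluster (cl i'). (obs_prec i'' + gam i'') / 2 * (norm (\<theta> i'' - client_fit_at i'' (w (cl i')) t))\<^sup>2 \<ge> 0"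
    by (intro ballI excess_terms_nonneg)
  ultimately have "\<forall>i''\<in>cluster (cl i'). (obs_prec i'' + gam i'') / 2 * (norm (\<theta> i'' - client_fit_at i'' (w (cl i')) t))\<^sup>2 = 0"
    using sum_nonneg_eq_0_iff[OF finite_cluster, of "cl i'" "\<lambda>i''. (obs_prec i'' + gam i'') / 2 * (norm (\<theta> i'' - client_fit_at i'' (w (cl i')) t))\<^sup>2"] by blast
  moreover have "i' \<in> cluster (cl i')" using i by (simp add: cluster_def)
  ultimately have "(obs_prec i' + gam i') / 2 * (norm (\<theta> i' - client_fit_at i' (w (cl i')) t))\<^sup>2 = 0" by blast
  moreover have "obs_prec i' + gam i' > 0" using obs_prec_pos[OF i] gam_pos[OF i] by simp
  ultimately show ?thesis using w by (simp add: client_fit_def)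
qed

lemma hier_est_eq_client_fit:
  assumes t: "\<forall>i'<n. t i' = direct_est X m i' (y i')" and i: "i' < n"
  shows "hier_est k n m X cl (\<lambda>_. 1 / sb\<^sup>2) (\<lambda>i'. 1 / (sbj (cl i'))\<^sup>2) sig y i' = client_fit i' t"
proof -
  define obj where "obj = objective k n m X cl (\<lambda>_. 1 / sb\<^sup>2) (\<lambda>i'. 1 / (sbj (cl i'))\<^sup>2) sig y"
  define est where "est = hier_est k n m X cl (\<lambda>_. 1 / sb\<^sup>2) (\<lambda>i'. 1 / (sbj (cl i'))\<^sup>2) sig y"
  define P where "P = (\<lambda>\<theta>. \<exists>w wb. \<forall>\<theta>' w' wb'. obj \<theta> w wb \<le> obj \<theta>' w' wb')"
  have obj_eq: "obj \<theta> w wb = excess \<theta> w wb t + residual y t" for \<theta> w wb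
    unfolding obj_def by (rule objective_decomp[OF t])
  have excess_fit: "excess (\<lambda>i'. client_fit i' t) (\<lambda>j. cluster_fit j t) (global_fit t) t = 0"
    by (rule excess_at_fit) simp
  have "P (\<lambda>i'. client_fit i' t)"
    unfolding P_def obj_eq using excess_fit excess_nonneg
    by (intro exI[of _ "\<lambda>j. cluster_fit j t"] exI[of _ "global_fit t"] allI) auto
  then have "P (SOME \<theta>. P \<theta>)" by (rule someI[where P=P])
  moreover have "est = (SOME \<theta>. P \<theta>)"
    unfolding est_def hier_est_def P_def obj_def by (rule refl)
  ultimately obtain w wb where "obj est w wb \<le> obj (\<lambda>i'. client_fit i' t) (\<lambda>j. cluster_fit j t) (global_fit t)"
    unfolding P_def by blast
  then have "excess est w wb t \<le> 0"
    unfolding obj_eq excess_fit by linarith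
  then show ?thesis using excess_nonpos_imp_client_fit i unfolding est_def by blast
qed

section \<open>Shrinkage weights\<close>

definition "cluster_gain i = gam i / ((obs_prec i + gam i) * (lam + cluster_prec (cl i)))"
definition "shrink_weight i i' = (if i' = i then obs_prec i / (obs_prec i + gam i) else 0)
   + cluster_gain i * (lam / total_weight * (cluster_weight (cl i') / cluster_prec (cl i')) * client_prec i' + (if cl i' = cl i then client_prec i' else 0))"

lemma cluster_sum_all_clients: "cluster_sum j t = (\<Sum>i'<n. (if cl i' = j then client_prec i' else 0) *\<^sub>R t i')"
  unfolding cluster_sum_def cluster_def by (simp add: sum.inter_filter[symmetric] if_distrib[of "\<lambda>x. x *\<^sub>R _"] cong: if_cong)

lemma cluster_prec_all_clients: "cluster_prec j = (\<Sum>i'<n. (if cl i' = j then client_prec i' else 0))"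
  unfolding cluster_prec_def cluster_def by (simp add: sum.inter_filter[symmetric])

lemma global_fit_lin: "global_fit t = (\<Sum>i'<n. (cluster_weight (cl i') / (total_weight * cluster_prec (cl i')) * client_prec i') *\<^sub>R t i')"
proof -
  have "(\<Sum>j<k. cluster_weight j *\<^sub>R cluster_mean j t) = (\<Sum>j<k. \<Sum>i'\<in>cluster j. (cluster_weight (cl i') / cluster_prec (cl i') * client_prec i') *\<^sub>R t i')"
  proof (rule sum.cong[OF refl])
    fix j assume "j \<in> {..<k}"
    have "cluster_weight j *\<^sub>R cluster_mean j t = (\<Sum>i'\<in>cluster j. (cluster_weight j / cluster_prec j * client_prec i') *\<^sub>R t i')"
      unfolding cluster_mean_def cluster_sum_def by (simp add: scaleR_sum_right)
    also have "\<dots> = (\<Sum>i'\<in>cluster j. (cluster_weight (cl i') / cluster_prec (cl i') * client_prec i') *\<^sub>R t i')"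
      by (rule sum.cong) (auto simp: cluster_def)
    finally show "cluster_weight j *\<^sub>R cluster_mean j t = (\<Sum>i'\<in>cluster j. (cluster_weight (cl i') / cluster_prec (cl i') * client_prec i') *\<^sub>R t i')" .
  qed
  also have "\<dots> = (\<Sum>i'<n. (cluster_weight (cl i') / cluster_prec (cl i') * client_prec i') *\<^sub>R t i')" by (rule sum_over_clusters)
  finally show ?thesis unfolding global_fit_def by (simp add: scaleR_sum_right)
qed

lemma sum_global_weights: "(\<Sum>i'<n. cluster_weight (cl i') / cluster_prec (cl i') * client_prec i') = total_weight"
proof -
  have "(\<Sum>i'<n. cluster_weight (cl i') / cluster_prec (cl i') * client_prec i') = (\<Sum>j<k. \<Sum>i'\<in>cluster j. cluster_weight (cl i') / cluster_prec (cl i') * client_prec i')"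
    by (rule sum_over_clusters[symmetric])
  also have "\<dots> = (\<Sum>j<k. cluster_weight j)"
  proof (rule sum.cong[OF refl])
    fix j assume j: "j \<in> {..<k}"
    have "(\<Sum>i'\<in>cluster j. cluster_weight (cl i') / cluster_prec (cl i') * client_prec i') = (\<Sum>i'\<in>cluster j. cluster_weight j / cluster_prec j * client_prec i')"
      by (rule sum.cong) (auto simp: cluster_def)
    also have "\<dots> = cluster_weight j / cluster_prec j * cluster_prec j" by (simp add: cluster_prec_def sum_distrib_left)
    also have "\<dots> = cluster_weight j" using cluster_prec_pos[of j] j by simp
    finally show "(\<Sum>i'\<in>cluster j. cluster_weight (cl i') / cluster_prec (cl i') * client_prec i') = cluster_weight j" .
  qed
  finally show ?thesis by (simp add: total_weight_def)
qed

lemma client_fit_lin: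
  assumes i: "i < n"
  shows "client_fit i t = (\<Sum>i'<n. shrink_weight i i' *\<^sub>R t i')"
proof -
  define A where "A = obs_prec i / (obs_prec i + gam i)"
  define B where "B = cluster_gain i * lam / total_weight"
  have ti: "t i = (\<Sum>i'<n. (if i' = i then 1 else 0) *\<^sub>R t i')"
    using i by (simp add: if_distrib[of "\<lambda>x. x *\<^sub>R _"] cong: if_cong)
  have ag: "obs_prec i + gam i > 0" using obs_prec_pos[OF i] gam_pos[OF i] by simp
  have J: "cl i < k" using i cl_lt by auto
  have lh: "lam + cluster_prec (cl i) > 0" using lam_pos cluster_prec_pos[OF J] by simp
  have "client_fit i t = A *\<^sub>R t i + B *\<^sub>R (\<Sum>i'<n. (cluster_weight (cl i') / cluster_prec (cl i') * client_prec i') *\<^sub>R t i')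
        + cluster_gain i *\<^sub>R cluster_sum (cl i) t"
  proof -
    have "client_fit i t = A *\<^sub>R t i + (gam i / (obs_prec i + gam i) / (lam + cluster_prec (cl i)) * lam) *\<^sub>R global_fit t
        + (gam i / (obs_prec i + gam i) / (lam + cluster_prec (cl i))) *\<^sub>R cluster_sum (cl i) t"
      unfolding client_fit_def client_fit_at_def cluster_fit_def cluster_fit_at_def A_def by (simp add: scaleR_add_right)
    moreover have "global_fit t = (1/total_weight) *\<^sub>R (\<Sum>i'<n. (cluster_weight (cl i') / cluster_prec (cl i') * client_prec i') *\<^sub>R t i')"
      unfolding global_fit_lin by (simp add: scaleR_sum_right)
    ultimately show ?thesis unfolding B_def cluster_gain_def by (simp add: field_simps)
  qed
  also have "\<dots> = (\<Sum>i'<n. shrink_weight i i' *\<^sub>R t i')"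
    unfolding ti cluster_sum_all_clients shrink_weight_def A_def[symmetric]
    by (simp add: scaleR_sum_right sum.distrib[symmetric] scaleR_add_left B_def algebra_simps)
      (rule sum.cong; simp)
  finally show ?thesis .
qed

lemma sum_shrink_weight:
  assumes i: "i < n"
  shows "(\<Sum>i'<n. shrink_weight i i') = 1"
proof -
  have ag: "obs_prec i + gam i > 0" using obs_prec_pos[OF i] gam_pos[OF i] by simp
  have J: "cl i < k" using i cl_lt by auto
  have lh: "lam + cluster_prec (cl i) > 0" using lam_pos cluster_prec_pos[OF J] by simp
  have "(\<Sum>i'<n. shrink_weight i i') = obs_prec i / (obs_prec i + gam i) + cluster_gain i * (lam / total_weight * (\<Sum>i'<n. cluster_weight (cl i') / cluster_prec (cl i') * client_prec i') + cluster_prec (cl i))"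
    unfolding shrink_weight_def cluster_prec_all_clients using i
    by (simp add: sum.distrib sum_distrib_left sum_distrib_right algebra_simps)
  also have "\<dots> = obs_prec i / (obs_prec i + gam i) + cluster_gain i * (lam + cluster_prec (cl i))"
    unfolding sum_global_weights using total_weight_pos by simp
  also have "cluster_gain i * (lam + cluster_prec (cl i)) = gam i / (obs_prec i + gam i)"
    unfolding cluster_gain_def using ag lh by simp
  also have "obs_prec i / (obs_prec i + gam i) + gam i / (obs_prec i + gam i) = 1"
    using ag by (simp add: add_divide_distrib[symmetric])
  finally show ?thesis .
qed

text \<open>Covariances of a coordinate of \<open>\<theta>\<^sup>d\<^sub>i\<^sub>'\<^sub>'\<close> with the same coordinate of \<open>\<theta>\<^sup>d\<^sub>i\<^sub>'\<close>
  and of \<open>\<theta>\<^sub>i\<^sup>*\<close>, respectively.\<close>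

definition "cov_direct i' i'' = sb\<^sup>2 * (if cl i' = cl i'' then 1 else 0) + (if i' = i'' then 1 / gam i' + 1 / obs_prec i' else 0)"
definition "cov_direct_param i i'' = sb\<^sup>2 * (if cl i'' = cl i then 1 else 0) + (if i'' = i then 1 / gam i else 0)"

lemma sb_sq_inverse_lam: "sb\<^sup>2 = 1 / lam" using sb_pos by (simp add: lam_def)

lemma sum_shrink_weight_cluster:
  assumes i: "i < n"
  shows "(\<Sum>i'<n. if cl i' = j then shrink_weight i i' else 0) = (if cl i = j then obs_prec i / (obs_prec i + gam i) else 0)
     + cluster_gain i * (lam / total_weight * (cluster_weight j / cluster_prec j) * cluster_prec j + (if j = cl i then cluster_prec j else 0))"
proof -
  define A where "A = obs_prec i / (obs_prec i + gam i)"
  define c where "c = lam / total_weight * (cluster_weight j / cluster_prec j)"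
  define f1 where "f1 i' = (if i' = i \<and> cl i = j then A else 0)" for i'
  define f2 where "f2 i' = (if cl i' = j then client_prec i' else 0)" for i'
  define g where "g i' = (if j = cl i then f2 i' else 0)" for i'
  have "(\<Sum>i'<n. if cl i' = j then shrink_weight i i' else 0) = (\<Sum>i'<n. f1 i' + cluster_gain i * (c * f2 i' + g i'))"
    by (rule sum.cong) (auto simp: shrink_weight_def f1_def f2_def g_def c_def A_def)
  also have "\<dots> = sum f1 {..<n} + cluster_gain i * (c * sum f2 {..<n} + sum g {..<n})"
    by (simp only: sum.distrib sum_distrib_left[symmetric])
  also have "sum f1 {..<n} = (if cl i = j then A else 0)"
    using i unfolding f1_def by (cases "cl i = j") auto
  also have "sum f2 {..<n} = cluster_prec j" unfolding f2_def cluster_prec_all_clients ..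
  also have "sum g {..<n} = (if j = cl i then cluster_prec j else 0)"
    unfolding g_def using \<open>sum f2 {..<n} = cluster_prec j\<close> by simp
  finally show ?thesis unfolding A_def c_def .
qed

lemma inverse_client_prec:
  assumes "i < n"
  shows "1 / gam i + 1 / obs_prec i = 1 / client_prec i"
  using obs_prec_pos[OF assms] gam_pos[OF assms] unfolding client_prec_def by (simp add: divide_simps)

lemma own_weight_div_client_prec:
  assumes "i < n"
  shows "obs_prec i / (obs_prec i + gam i) / client_prec i = 1 / gam i"
  using obs_prec_pos[OF assms] gam_pos[OF assms] unfolding client_prec_def by (simp add: divide_simps)

lemma cluster_weight_inverse:
  assumes "j < k"
  shows "cluster_weight j * (sb\<^sup>2 + 1 / cluster_prec j) = 1"
  using cluster_prec_pos[OF assms] lam_pos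
  unfolding sb_sq_inverse_lam cluster_weight_def by (simp add: divide_simps)

lemma cluster_gain_balance:
  assumes "i < n"
  shows "sb\<^sup>2 * (obs_prec i / (obs_prec i + gam i) - 1) + cluster_gain i * (sb\<^sup>2 * cluster_prec (cl i) + 1) = 0"
proof -
  have "cluster_prec (cl i) > 0" using cluster_prec_pos cl_lt assms by auto
  then show ?thesis
    using obs_prec_pos[OF assms] gam_pos[OF assms] lam_pos
    unfolding sb_sq_inverse_lam cluster_gain_def by (simp add: divide_simps)
qed

lemma sum_shrink_weight_cov_direct:
  assumes "i'' < n"
  shows "(\<Sum>i'<n. shrink_weight i i' * cov_direct i' i'')
    = sb\<^sup>2 * (\<Sum>i'<n. if cl i' = cl i'' then shrink_weight i i' else 0)
      + shrink_weight i i'' / client_prec i''"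
proof -
  have "(\<Sum>i'<n. shrink_weight i i' * cov_direct i' i'')
      = (\<Sum>i'<n. sb\<^sup>2 * (if cl i' = cl i'' then shrink_weight i i' else 0)
         + (if i' = i'' then shrink_weight i i' * (1 / gam i'' + 1 / obs_prec i'') else 0))"
    by (rule sum.cong) (auto simp: cov_direct_def algebra_simps)
  then show ?thesis
    using assms by (simp add: sum.distrib sum_distrib_left inverse_client_prec)
qed

text \<open>Gauss-Markov identity: \<open>\<Sum>\<^sub>i\<^sub>' c\<^sub>i\<^sub>i\<^sub>' Cov(\<theta>\<^sup>d\<^sub>i\<^sub>', \<theta>\<^sup>d\<^sub>i\<^sub>'\<^sub>') - Cov(\<theta>\<^sub>i\<^sup>*, \<theta>\<^sup>d\<^sub>i\<^sub>'\<^sub>')\<close> does not depend on \<open>i''\<close>.\<close>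

lemma shrink_weight_cov_identity:
  assumes i: "i < n" and i'': "i'' < n"
  shows "(\<Sum>i'<n. shrink_weight i i' * cov_direct i' i'') - cov_direct_param i i''
    = cluster_gain i * lam / total_weight"
proof -
  define A where "A = obs_prec i / (obs_prec i + gam i)"
  define J where "J = cl i"
  define J'' where "J'' = cl i''"
  have J'': "cluster_prec J'' > 0" using cluster_prec_pos cl_lt i'' by (auto simp: J''_def)
  have client'': "client_prec i'' > 0" using client_prec_pos[OF i''] .
  have shrink'': "shrink_weight i i'' = (if i'' = i then A else 0) + cluster_gain i
      * (lam / total_weight * (cluster_weight J'' / cluster_prec J'') * client_prec i''
         + (if J'' = J then client_prec i'' else 0))"
    by (simp add: shrink_weight_def A_def J_def J''_def)
  have "(\<Sum>i'<n. shrink_weight i i' * cov_direct i' i'') - cov_direct_param i i'' =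
     sb\<^sup>2 * ((if J = J'' then A else 0) + cluster_gain i * (lam / total_weight * cluster_weight J''
        + (if J'' = J then cluster_prec J'' else 0)))
     + ((if i'' = i then A else 0) + cluster_gain i * (lam / total_weight * (cluster_weight J'' / cluster_prec J'')
        * client_prec i'' + (if J'' = J then client_prec i'' else 0))) / client_prec i''
     - (sb\<^sup>2 * (if J'' = J then 1 else 0) + (if i'' = i then 1 / gam i else 0))"
    unfolding sum_shrink_weight_cov_direct[OF i''] sum_shrink_weight_cluster[OF i] shrink''
    using J'' by (simp add: cov_direct_param_def A_def J_def J''_def)
  also have "\<dots> = cluster_gain i * (lam / total_weight) * (cluster_weight J'' * (sb\<^sup>2 + 1 / cluster_prec J''))
       + (if J'' = J then sb\<^sup>2 * (A - 1) + cluster_gain i * (sb\<^sup>2 * cluster_prec J'' + 1) else 0)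
       + (if i'' = i then A / client_prec i'' - 1 / gam i else 0)"
    using client'' by (cases "J'' = J"; cases "i'' = i")
      (simp_all add: field_simps eq_commute[of J J''], simp_all add: add_divide_distrib divide_divide_eq_left)
  also have "\<dots> = cluster_gain i * lam / total_weight"
    using cluster_weight_inverse[of J''] cluster_gain_balance[OF i] own_weight_div_client_prec[OF i] cl_lt i''
    by (auto simp: A_def J_def J''_def)
  finally show ?thesis .
qed

section \<open>Linear forms in the noise\<close>

text \<open>A random variable that is linear in the noise is represented by its coefficient vector
  \<open>\<alpha>\<close>: its value at \<open>\<omega>\<close> is \<open>pairing (\<lambda>\<iota>. g \<iota> \<omega>) \<alpha>\<close>, and \<open>cov \<alpha> \<alpha>'\<close> below is the covariance of two
  such variables.\<close>

definition noises :: "'d noise_idx set" where "noises = noise_set k n m"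
definition sd :: "'d noise_idx \<Rightarrow> real" where "sd = noise_sd sb sbj sig cl"
definition unit_coef :: "'d noise_idx \<Rightarrow> 'd noise_idx \<Rightarrow> real" where "unit_coef \<iota>0 \<iota> = (if \<iota> = \<iota>0 then 1 else 0)"
definition pairing :: "('d noise_idx \<Rightarrow> real) \<Rightarrow> ('d noise_idx \<Rightarrow> real) \<Rightarrow> real" where
  "pairing F \<alpha> = (\<Sum>\<iota>\<in>noises. \<alpha> \<iota> * F \<iota>)"

lemma finite_noises: "finite noises"
proof -
  have "noises \<subseteq> (\<lambda>(j, c). ClustN j c) ` ({..<k} \<times> UNIV) \<union> (\<lambda>(i, c). ClientN i c) ` ({..<n} \<times> UNIV)
     \<union> (\<lambda>(i, r). ObsN i r) ` (SIGMA i:{..<n}. {..<m i})"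
    unfolding noises_def noise_set_def by auto
  moreover have "finite ((\<lambda>(j, c). ClustN j c) ` ({..<k} \<times> (UNIV :: 'd set)) \<union> (\<lambda>(i, c). ClientN i c) ` ({..<n} \<times> (UNIV :: 'd set))
     \<union> (\<lambda>(i, r). ObsN i r) ` (SIGMA i:{..<n}. {..<m i}))"
    by auto
  ultimately show ?thesis by (rule finite_subset)
qed

lemma mem_noises[simp]:
  "ClustN j c \<in> noises \<longleftrightarrow> j < k" "ClientN i' c \<in> noises \<longleftrightarrow> i' < n" "ObsN i' r \<in> noises \<longleftrightarrow> i' < n \<and> r < m i'"
  by (auto simp: noises_def noise_set_def)

lemma sd_simps[simp]:
  "sd (ClustN j c) = sb" "sd (ClientN i' c) = sbj (cl i')" "sd (ObsN i' r) = sig i'"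
  by (simp_all add: sd_def noise_sd_def)

lemma pairing_add: "pairing F (\<lambda>\<iota>. f \<iota> + g \<iota>) = pairing F f + pairing F g"
  by (simp add: pairing_def algebra_simps sum.distrib)
lemma pairing_diff: "pairing F (\<lambda>\<iota>. f \<iota> - g \<iota>) = pairing F f - pairing F g"
  by (simp add: pairing_def algebra_simps sum_subtractf)
lemma pairing_scale: "pairing F (\<lambda>\<iota>. c * f \<iota>) = c * pairing F f"
  by (simp add: pairing_def sum_distrib_left algebra_simps)
lemma pairing_sum: "pairing F (\<lambda>\<iota>. \<Sum>x\<in>K. f x \<iota>) = (\<Sum>x\<in>K. pairing F (f x))"
  by (simp add: pairing_def sum_distrib_right sum.swap[of _ noises])
lemma pairing_unit_coef: "\<iota>0 \<in> noises \<Longrightarrow> pairing F (unit_coef \<iota>0) = F \<iota>0"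
  using finite_noises by (simp add: pairing_def unit_coef_def if_distrib[of "\<lambda>x. x * _"] cong: if_cong)

definition "cov \<alpha> \<alpha>' = pairing (\<lambda>\<iota>. \<alpha>' \<iota> * (sd \<iota>)\<^sup>2) \<alpha>"

lemma cov_nonneg: "cov \<alpha> \<alpha> \<ge> 0"
  unfolding cov_def pairing_def by (intro sum_nonneg) (metis mult.assoc mult_nonneg_nonneg zero_le_power2 zero_le_square)

text \<open>Coefficients of coordinate \<open>b\<close> of \<open>\<theta>\<^sub>i\<^sub>'\<^sup>* - \<theta>0\<close> and of \<open>\<theta>\<^sup>d\<^sub>i\<^sub>' - \<theta>0\<close>, and of
  \<open>y\<^sub>i\<^sub>'\<^sub>r - X\<^sub>i\<^sub>'\<^sub>r \<bullet> \<theta>0\<close>.\<close>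

definition "coef_param i' b \<iota> = unit_coef (ClustN (cl i') b) \<iota> + unit_coef (ClientN i' b) \<iota>"
definition "coef_direct i' b \<iota> = coef_param i' b \<iota> + (\<Sum>r<m i'. (X i' r $ b / \<beta> i') * unit_coef (ObsN i' r) \<iota>)"
definition "coef_obs i' r \<iota> = (\<Sum>b\<in>UNIV. X i' r $ b * coef_param i' b \<iota>) + unit_coef (ObsN i' r) \<iota>"

lemma pairing_coef_param: "i' < n \<Longrightarrow> pairing F (coef_param i' b) = F (ClustN (cl i') b) + F (ClientN i' b)"
  unfolding coef_param_def using cl_lt by (simp add: pairing_add pairing_unit_coef)

lemma pairing_coef_direct: "i' < n \<Longrightarrow> pairing F (coef_direct i' b) = F (ClustN (cl i') b) + F (ClientN i' b)
     + (\<Sum>r<m i'. (X i' r $ b / \<beta> i') * F (ObsN i' r))"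
  unfolding coef_direct_def pairing_add pairing_sum pairing_scale by (simp add: pairing_coef_param pairing_unit_coef)

lemma pairing_coef_obs: "i' < n \<Longrightarrow> r < m i' \<Longrightarrow> pairing F (coef_obs i' r) = (\<Sum>b\<in>UNIV. X i' r $ b * (F (ClustN (cl i') b) + F (ClientN i' b)))
     + F (ObsN i' r)"
  unfolding coef_obs_def pairing_add pairing_sum pairing_scale by (simp add: pairing_coef_param pairing_unit_coef)

lemma unit_coef_simps[simp]: "unit_coef \<iota>0 \<iota> = (if \<iota> = \<iota>0 then 1 else 0)" by (simp add: unit_coef_def)

lemma coef_param_simps[simp]:
  "coef_param i' b (ClustN j c) = (if cl i' = j \<and> c = b then 1 else 0)"
  "coef_param i' b (ClientN i2 c) = (if i2 = i' \<and> c = b then 1 else 0)"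
  "coef_param i' b (ObsN i2 r) = 0"
  by (auto simp: coef_param_def)

lemma coef_direct_simps[simp]:
  "coef_direct i' b (ClustN j c) = (if cl i' = j \<and> c = b then 1 else 0)"
  "coef_direct i' b (ClientN i2 c) = (if i2 = i' \<and> c = b then 1 else 0)"
  "coef_direct i' b (ObsN i2 r) = (if i2 = i' \<and> r < m i' then X i' r $ b / \<beta> i' else 0)"
  by (auto simp: coef_direct_def if_distrib[of "\<lambda>x. _ * x"] cong: if_cong)

lemma coef_obs_simps[simp]:
  "coef_obs i' r (ClustN j c) = (if cl i' = j then X i' r $ c else 0)"
  "coef_obs i' r (ClientN i2 c) = (if i2 = i' then X i' r $ c else 0)"
  "coef_obs i' r (ObsN i2 r2) = (if i2 = i' \<and> r2 = r then 1 else 0)"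
  by (auto simp: coef_obs_def if_distrib[of "\<lambda>x. _ * x"] cong: if_cong)

definition coef_blk :: "nat \<Rightarrow> (nat \<Rightarrow> real^'d) \<Rightarrow> (nat \<Rightarrow> real^'d^'d) \<Rightarrow> 'd \<Rightarrow> 'd noise_idx \<Rightarrow> real" where
  "coef_blk i A B a \<iota> = (\<Sum>r<m i. A r $ a * coef_obs i r \<iota>) + (\<Sum>i''\<in>{..<n}-{i}. \<Sum>b\<in>UNIV. B i'' $ a $ b * coef_direct i'' b \<iota>)"

definition "blk_diag i A B a i' = (if i' = i then (\<Sum>r<m i. A r $ a * X i r $ a) else B i' $ a $ a)"

lemma coef_blk_ClustN:
  assumes i: "i < n"
  shows "coef_blk i A B a (ClustN j a) = (\<Sum>i'<n. if cl i' = j then blk_diag i A B a i' else 0)"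
proof -
  have "coef_blk i A B a (ClustN j a) = (if cl i = j then blk_diag i A B a i else 0) + (\<Sum>i''\<in>{..<n}-{i}. if cl i'' = j then blk_diag i A B a i'' else 0)"
    unfolding coef_blk_def blk_diag_def
    by (simp add: if_distrib[of "\<lambda>x. _ * x"] if_conj_zero sum_if_zero sum.delta' sum.delta cong: if_cong)
  also have "\<dots> = (\<Sum>i'<n. if cl i' = j then blk_diag i A B a i' else 0)"
    using i by (simp add: sum.remove[of "{..<n}" i])
  finally show ?thesis .
qed

lemma coef_blk_ClientN:
  assumes i: "i < n" and i': "i' < n"
  shows "coef_blk i A B a (ClientN i' a) = blk_diag i A B a i'"
  unfolding coef_blk_def blk_diag_def using i'
  by (simp add: if_distrib[of "\<lambda>x. _ * x"] if_conj_zero sum_if_zero sum.delta' sum.delta cong: if_cong)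

lemma coef_blk_ObsN:
  assumes i: "i < n" and i': "i' < n" and r: "r < m i'"
  shows "coef_blk i A B a (ObsN i' r) = (if i' = i then A r $ a else (\<Sum>b\<in>UNIV. B i' $ a $ b * X i' r $ b) / \<beta> i')"
  unfolding coef_blk_def using i' r
  by (cases "i' = i") (simp_all add: if_distrib[of "\<lambda>x. _ * x"] if_conj_zero sum_if_zero sum.delta' sum.delta sum_divide_distrib cong: if_cong)

lemma gram_orthogonal_entry: "i' < n \<Longrightarrow> (\<Sum>r<m i'. X i' r $ a * X i' r $ b) = (if a = b then \<beta> i' else 0)"
proof -
  assume i': "i' < n"
  have "(\<Sum>r<m i'. X i' r $ a * X i' r $ b) = gram X m i' $ a $ b" by (simp add: gram_def)
  also have "\<dots> = (if a = b then \<beta> i' else 0)" using gram_eq i' by (simp add: mat_def)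
  finally show ?thesis .
qed

lemma obs_noise_cov:
  assumes i: "i < n" and i': "i' < n"
  shows "(\<Sum>r<m i'. X i' r $ a / \<beta> i' * (coef_blk i A B a (ObsN i' r) * (sig i')\<^sup>2)) = (sig i')\<^sup>2 / \<beta> i' * blk_diag i A B a i'"
proof -
  have b: "\<beta> i' > 0" using gram_eq i' by auto
  have "(\<Sum>r<m i'. X i' r $ a / \<beta> i' * (coef_blk i A B a (ObsN i' r) * (sig i')\<^sup>2)) =
      (\<Sum>r<m i'. X i' r $ a / \<beta> i' * ((if i' = i then A r $ a else (\<Sum>b\<in>UNIV. B i' $ a $ b * X i' r $ b) / \<beta> i') * (sig i')\<^sup>2))"
    using coef_blk_ObsN[OF i i'] by (intro sum.cong) auto
  also have "\<dots> = (sig i')\<^sup>2 / \<beta> i' * blk_diag i A B a i'"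
  proof (cases "i' = i")
    case True
    then show ?thesis unfolding blk_diag_def by (simp add: sum_distrib_left algebra_simps)
  next
    case False
    have "(\<Sum>r<m i'. X i' r $ a / \<beta> i' * ((\<Sum>b\<in>UNIV. B i' $ a $ b * X i' r $ b) / \<beta> i' * (sig i')\<^sup>2))
        = (\<Sum>r<m i'. \<Sum>b\<in>UNIV. (sig i')\<^sup>2 / (\<beta> i')\<^sup>2 * (B i' $ a $ b * (X i' r $ a * X i' r $ b)))"
    proof (rule sum.cong[OF refl])
      fix r
      have "X i' r $ a / \<beta> i' * ((\<Sum>b\<in>UNIV. B i' $ a $ b * X i' r $ b) / \<beta> i' * (sig i')\<^sup>2)
          = (\<Sum>b\<in>UNIV. X i' r $ a / \<beta> i' * (B i' $ a $ b * X i' r $ b / \<beta> i' * (sig i')\<^sup>2))"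
        by (simp only: sum_divide_distrib sum_distrib_right sum_distrib_left)
      also have "\<dots> = (\<Sum>b\<in>UNIV. (sig i')\<^sup>2 / (\<beta> i')\<^sup>2 * (B i' $ a $ b * (X i' r $ a * X i' r $ b)))"
        by (rule sum.cong[OF refl]) (simp add: power2_eq_square)
      finally show "X i' r $ a / \<beta> i' * ((\<Sum>b\<in>UNIV. B i' $ a $ b * X i' r $ b) / \<beta> i' * (sig i')\<^sup>2)
          = (\<Sum>b\<in>UNIV. (sig i')\<^sup>2 / (\<beta> i')\<^sup>2 * (B i' $ a $ b * (X i' r $ a * X i' r $ b)))" .
    qed
    also have "\<dots> = (\<Sum>b\<in>UNIV. \<Sum>r<m i'. (sig i')\<^sup>2 / (\<beta> i')\<^sup>2 * (B i' $ a $ b * (X i' r $ a * X i' r $ b)))"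
      by (rule sum.swap)
    also have "\<dots> = (sig i')\<^sup>2 / (\<beta> i')\<^sup>2 * (\<Sum>b\<in>UNIV. B i' $ a $ b * (\<Sum>r<m i'. X i' r $ a * X i' r $ b))"
      by (simp only: sum_distrib_left)
    also have "\<dots> = (sig i')\<^sup>2 / (\<beta> i')\<^sup>2 * (B i' $ a $ a * \<beta> i')"
      using i' by (simp add: gram_orthogonal_entry if_distrib[of "\<lambda>x. _ * x"] cong: if_cong)
    also have "\<dots> = (sig i')\<^sup>2 / \<beta> i' * blk_diag i A B a i'"
      using False b unfolding blk_diag_def by (simp add: power2_eq_square)
    finally show ?thesis using False by simp
  qed
  finally show ?thesis .
qed

lemma cov_coef_direct_coef_blk:
  assumes i: "i < n" and i': "i' < n"
  shows "cov (coef_direct i' a) (coef_blk i A B a) = (\<Sum>i''<n. cov_direct i' i'' * blk_diag i A B a i'')"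
proof -
  have "cov (coef_direct i' a) (coef_blk i A B a) = sb\<^sup>2 * coef_blk i A B a (ClustN (cl i') a) + (sbj (cl i'))\<^sup>2 * coef_blk i A B a (ClientN i' a)
     + (\<Sum>r<m i'. X i' r $ a / \<beta> i' * (coef_blk i A B a (ObsN i' r) * (sig i')\<^sup>2))"
    unfolding cov_def pairing_coef_direct[OF i'] by (simp add: algebra_simps)
  also have "\<dots> = sb\<^sup>2 * (\<Sum>i''<n. if cl i'' = cl i' then blk_diag i A B a i'' else 0)
       + ((sbj (cl i'))\<^sup>2 + (sig i')\<^sup>2 / \<beta> i') * blk_diag i A B a i'"
    unfolding coef_blk_ClustN[OF i] coef_blk_ClientN[OF i i'] obs_noise_cov[OF i i'] by (simp add: algebra_simps)
  also have "\<dots> = (\<Sum>i''<n. cov_direct i' i'' * blk_diag i A B a i'')"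
  proof -
    have g: "1 / gam i' = (sbj (cl i'))\<^sup>2" by (simp add: gam_def)
    have a: "1 / obs_prec i' = (sig i')\<^sup>2 / \<beta> i'" by (simp add: obs_prec_def)
    have "(\<Sum>i''<n. cov_direct i' i'' * blk_diag i A B a i'') = (\<Sum>i''<n. sb\<^sup>2 * (if cl i'' = cl i' then blk_diag i A B a i'' else 0)
        + (if i'' = i' then (1 / gam i' + 1 / obs_prec i') * blk_diag i A B a i'' else 0))"
      by (rule sum.cong) (auto simp: cov_direct_def algebra_simps)
    also have "\<dots> = sb\<^sup>2 * (\<Sum>i''<n. if cl i'' = cl i' then blk_diag i A B a i'' else 0)
        + (1 / gam i' + 1 / obs_prec i') * blk_diag i A B a i'"
      using i' by (simp add: sum.distrib sum_distrib_left sum.delta)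
    finally show ?thesis unfolding g a by simp
  qed
  finally show ?thesis .
qed

lemma cov_coef_param_coef_blk:
  assumes i: "i < n"
  shows "cov (coef_param i a) (coef_blk i A B a) = (\<Sum>i''<n. cov_direct_param i i'' * blk_diag i A B a i'')"
proof -
  have "cov (coef_param i a) (coef_blk i A B a) = sb\<^sup>2 * coef_blk i A B a (ClustN (cl i) a) + (sbj (cl i))\<^sup>2 * coef_blk i A B a (ClientN i a)"
    unfolding cov_def pairing_coef_param[OF i] by (simp add: algebra_simps)
  also have "\<dots> = sb\<^sup>2 * (\<Sum>i''<n. if cl i'' = cl i then blk_diag i A B a i'' else 0) + (sbj (cl i))\<^sup>2 * blk_diag i A B a i"
    unfolding coef_blk_ClustN[OF i] coef_blk_ClientN[OF i i] ..
  also have "\<dots> = (\<Sum>i''<n. cov_direct_param i i'' * blk_diag i A B a i'')"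
  proof -
    have "(\<Sum>i''<n. cov_direct_param i i'' * blk_diag i A B a i'') = (\<Sum>i''<n. sb\<^sup>2 * (if cl i'' = cl i then blk_diag i A B a i'' else 0)
        + (if i'' = i then (sbj (cl i))\<^sup>2 * blk_diag i A B a i'' else 0))"
      by (rule sum.cong) (auto simp: cov_direct_param_def gam_def algebra_simps)
    also have "\<dots> = sb\<^sup>2 * (\<Sum>i''<n. if cl i'' = cl i then blk_diag i A B a i'' else 0) + (sbj (cl i))\<^sup>2 * blk_diag i A B a i"
      using i by (simp add: sum.distrib sum_distrib_left sum.delta)
    finally show ?thesis by simp
  qed
  finally show ?thesis .
qed

lemma sum_blk_diag:
  assumes i: "i < n"
  shows "(\<Sum>i''<n. blk_diag i A B a i'') = blk_times_Z X m n i A B $ a $ a"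
proof -
  have "(\<Sum>i''<n. blk_diag i A B a i'') = blk_diag i A B a i + (\<Sum>i''\<in>{..<n}-{i}. blk_diag i A B a i'')"
    using i by (simp add: sum.remove[of "{..<n}" i])
  also have "(\<Sum>i''\<in>{..<n}-{i}. blk_diag i A B a i'') = (\<Sum>i''\<in>{..<n}-{i}. B i'' $ a $ a)"
    by (rule sum.cong) (auto simp: blk_diag_def)
  finally show ?thesis by (simp add: blk_times_Z_def blk_diag_def sum_component)
qed

definition "coef_opt_err i a \<iota> = (\<Sum>i'<n. shrink_weight i i' * coef_direct i' a \<iota>) - coef_param i a \<iota>"

lemma cov_opt_err_coef_blk:
  assumes i: "i < n"
  shows "cov (coef_opt_err i a) (coef_blk i A B a) = cluster_gain i * lam / total_weight * blk_times_Z X m n i A B $ a $ a"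
proof -
  have "cov (coef_opt_err i a) (coef_blk i A B a) = (\<Sum>i'<n. shrink_weight i i' * cov (coef_direct i' a) (coef_blk i A B a)) - cov (coef_param i a) (coef_blk i A B a)"
    unfolding coef_opt_err_def cov_def pairing_diff pairing_sum pairing_scale ..
  also have "\<dots> = (\<Sum>i'<n. shrink_weight i i' * (\<Sum>i''<n. cov_direct i' i'' * blk_diag i A B a i'')) - (\<Sum>i''<n. cov_direct_param i i'' * blk_diag i A B a i'')"
    using cov_coef_direct_coef_blk[OF i] cov_coef_param_coef_blk[OF i] by simp
  also have "\<dots> = (\<Sum>i''<n. blk_diag i A B a i'' * ((\<Sum>i'<n. shrink_weight i i' * cov_direct i' i'') - cov_direct_param i i''))"
  proof -
    have "(\<Sum>i'<n. shrink_weight i i' * (\<Sum>i''<n. cov_direct i' i'' * blk_diag i A B a i'')) = (\<Sum>i'<n. \<Sum>i''<n. blk_diag i A B a i'' * (shrink_weight i i' * cov_direct i' i''))"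
      by (simp only: sum_distrib_left mult.commute mult.left_commute)
    also have "\<dots> = (\<Sum>i''<n. \<Sum>i'<n. blk_diag i A B a i'' * (shrink_weight i i' * cov_direct i' i''))" by (rule sum.swap)
    also have "\<dots> = (\<Sum>i''<n. blk_diag i A B a i'' * (\<Sum>i'<n. shrink_weight i i' * cov_direct i' i''))" by (simp only: sum_distrib_left)
    finally show ?thesis by (simp add: right_diff_distrib sum_subtractf mult.commute)
  qed
  also have "\<dots> = (\<Sum>i''<n. blk_diag i A B a i'' * (cluster_gain i * lam / total_weight))"
    using shrink_weight_cov_identity[OF i] by (intro sum.cong) auto
  also have "\<dots> = cluster_gain i * lam / total_weight * blk_times_Z X m n i A B $ a $ a"
    by (simp only: sum_distrib_right[symmetric] sum_blk_diag[OF i] mult.commute)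
  finally show ?thesis .
qed

lemma client_param_component:
  assumes i': "i' < n"
  shows "client_param \<theta>0 cl g i' \<omega> $ b = \<theta>0 $ b + pairing (\<lambda>\<iota>. g \<iota> \<omega>) (coef_param i' b)"
  unfolding pairing_coef_param[OF i'] by (simp add: client_param_def cluster_param_def)

lemma obs_affine:
  assumes i': "i' < n" and r: "r < m i'"
  shows "obs X \<theta>0 cl g i' \<omega> r = X i' r \<bullet> \<theta>0 + pairing (\<lambda>\<iota>. g \<iota> \<omega>) (coef_obs i' r)"
proof -
  have "X i' r \<bullet> client_param \<theta>0 cl g i' \<omega> = (\<Sum>b\<in>UNIV. X i' r $ b * (\<theta>0 $ b + (g (ClustN (cl i') b) \<omega> + g (ClientN i' b) \<omega>)))"
    unfolding inner_real_vec client_param_component[OF i'] pairing_coef_param[OF i'] ..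
  also have "\<dots> = X i' r \<bullet> \<theta>0 + (\<Sum>b\<in>UNIV. X i' r $ b * (g (ClustN (cl i') b) \<omega> + g (ClientN i' b) \<omega>))"
    unfolding inner_real_vec by (simp add: distrib_left sum.distrib)
  finally show ?thesis unfolding obs_def pairing_coef_obs[OF i' r] by simp
qed

lemma direct_est_orthogonal:
  assumes "i' < n"
  shows "direct_est X m i' yi = (1 / \<beta> i') *\<^sub>R Xty X m i' yi"
  using gram_eq assms by (intro direct_est_orthogonal_design) auto

lemma direct_est_component:
  assumes i': "i' < n"
  shows "direct_est X m i' (obs X \<theta>0 cl g i' \<omega>) $ b = \<theta>0 $ b + pairing (\<lambda>\<iota>. g \<iota> \<omega>) (coef_direct i' b)"
proof -
  define th where "th = client_param \<theta>0 cl g i' \<omega>"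
  have bp: "\<beta> i' > 0" using gram_eq i' by auto
  have "Xty X m i' (obs X \<theta>0 cl g i' \<omega>) $ b = (\<Sum>r<m i'. (X i' r \<bullet> th) * X i' r $ b) + (\<Sum>r<m i'. g (ObsN i' r) \<omega> * X i' r $ b)"
    unfolding Xty_def obs_def th_def by (simp add: sum_component distrib_right sum.distrib)
  also have "(\<Sum>r<m i'. (X i' r \<bullet> th) * X i' r $ b) = (\<Sum>b'\<in>UNIV. th $ b' * (\<Sum>r<m i'. X i' r $ b * X i' r $ b'))"
  proof -
    have "(\<Sum>r<m i'. (X i' r \<bullet> th) * X i' r $ b) = (\<Sum>r<m i'. \<Sum>b'\<in>UNIV. th $ b' * (X i' r $ b * X i' r $ b'))"
      unfolding inner_real_vec by (simp add: sum_distrib_right sum_distrib_left algebra_simps)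
    also have "\<dots> = (\<Sum>b'\<in>UNIV. \<Sum>r<m i'. th $ b' * (X i' r $ b * X i' r $ b'))" by (rule sum.swap)
    finally show ?thesis by (simp only: sum_distrib_left)
  qed
  also have "\<dots> = th $ b * \<beta> i'"
    using i' by (simp add: gram_orthogonal_entry if_distrib[of "\<lambda>x. _ * x"] cong: if_cong)
  finally have xt: "Xty X m i' (obs X \<theta>0 cl g i' \<omega>) $ b = th $ b * \<beta> i' + (\<Sum>r<m i'. g (ObsN i' r) \<omega> * X i' r $ b)" .
  have "direct_est X m i' (obs X \<theta>0 cl g i' \<omega>) $ b = th $ b + (\<Sum>r<m i'. X i' r $ b / \<beta> i' * g (ObsN i' r) \<omega>)"
    unfolding direct_est_orthogonal[OF i'] using bp
    by (simp add: xt sum_divide_distrib add_divide_distrib algebra_simps)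
  also have "\<dots> = \<theta>0 $ b + pairing (\<lambda>\<iota>. g \<iota> \<omega>) (coef_direct i' b)"
    unfolding th_def client_param_component[OF i'] pairing_coef_direct[OF i'] pairing_coef_param[OF i'] by simp
  finally show ?thesis .
qed

lemma blk_apply_component:
  assumes i: "i < n"
  shows "blk_apply m n i A B (obs X \<theta>0 cl g i \<omega>) (\<lambda>i''. direct_est X m i'' (obs X \<theta>0 cl g i'' \<omega>)) $ a
     = (blk_times_Z X m n i A B *v \<theta>0) $ a + pairing (\<lambda>\<iota>. g \<iota> \<omega>) (coef_blk i A B a)"
proof -
  define S where "S = {..<n} - {i}"
  define G where "G = (\<lambda>\<iota>. g \<iota> \<omega>)"
  have 1: "blk_apply m n i A B (obs X \<theta>0 cl g i \<omega>) (\<lambda>i''. direct_est X m i'' (obs X \<theta>0 cl g i'' \<omega>)) $ a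
     = (\<Sum>r<m i. obs X \<theta>0 cl g i \<omega> r * A r $ a) + (\<Sum>i''\<in>S. \<Sum>b\<in>UNIV. B i'' $ a $ b * direct_est X m i'' (obs X \<theta>0 cl g i'' \<omega>) $ b)"
    unfolding blk_apply_def S_def by (simp add: sum_component matrix_vector_mult_def)
  also have "\<dots> = ((\<Sum>r<m i. (X i r \<bullet> \<theta>0) * A r $ a) + (\<Sum>i''\<in>S. \<Sum>b\<in>UNIV. B i'' $ a $ b * \<theta>0 $ b))
      + ((\<Sum>r<m i. A r $ a * pairing G (coef_obs i r)) + (\<Sum>i''\<in>S. \<Sum>b\<in>UNIV. B i'' $ a $ b * pairing G (coef_direct i'' b)))"
  proof -
    have "(\<Sum>r<m i. obs X \<theta>0 cl g i \<omega> r * A r $ a) = (\<Sum>r<m i. (X i r \<bullet> \<theta>0) * A r $ a) + (\<Sum>r<m i. A r $ a * pairing G (coef_obs i r))"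
      unfolding sum.distrib[symmetric] G_def by (intro sum.cong refl) (simp add: obs_affine[OF i] algebra_simps)
    moreover have "(\<Sum>i''\<in>S. \<Sum>b\<in>UNIV. B i'' $ a $ b * direct_est X m i'' (obs X \<theta>0 cl g i'' \<omega>) $ b)
       = (\<Sum>i''\<in>S. \<Sum>b\<in>UNIV. B i'' $ a $ b * \<theta>0 $ b) + (\<Sum>i''\<in>S. \<Sum>b\<in>UNIV. B i'' $ a $ b * pairing G (coef_direct i'' b))"
      unfolding sum.distrib[symmetric] G_def by (intro sum.cong refl) (simp add: direct_est_component S_def algebra_simps)
    ultimately show ?thesis by simp
  qed
  also have "(\<Sum>r<m i. (X i r \<bullet> \<theta>0) * A r $ a) + (\<Sum>i''\<in>S. \<Sum>b\<in>UNIV. B i'' $ a $ b * \<theta>0 $ b)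
      = (blk_times_Z X m n i A B *v \<theta>0) $ a"
  proof -
    have "(blk_times_Z X m n i A B *v \<theta>0) $ a = (\<Sum>b\<in>UNIV. (\<Sum>r<m i. A r $ a * X i r $ b) * \<theta>0 $ b)
        + (\<Sum>b\<in>UNIV. (\<Sum>i''\<in>S. B i'' $ a $ b) * \<theta>0 $ b)"
      unfolding blk_times_Z_def S_def by (simp add: matrix_vector_mult_def sum_component distrib_right sum.distrib)
    also have "(\<Sum>b\<in>UNIV. (\<Sum>r<m i. A r $ a * X i r $ b) * \<theta>0 $ b) = (\<Sum>r<m i. (X i r \<bullet> \<theta>0) * A r $ a)"
    proof -
      have "(\<Sum>b\<in>UNIV. (\<Sum>r<m i. A r $ a * X i r $ b) * \<theta>0 $ b) = (\<Sum>b\<in>UNIV. \<Sum>r<m i. A r $ a * (X i r $ b * \<theta>0 $ b))"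
        by (simp add: sum_distrib_right mult.assoc)
      also have "\<dots> = (\<Sum>r<m i. \<Sum>b\<in>UNIV. A r $ a * (X i r $ b * \<theta>0 $ b))" by (rule sum.swap)
      finally show ?thesis by (simp add: inner_real_vec sum_distrib_left mult.commute)
    qed
    also have "(\<Sum>b\<in>UNIV. (\<Sum>i''\<in>S. B i'' $ a $ b) * \<theta>0 $ b) = (\<Sum>i''\<in>S. \<Sum>b\<in>UNIV. B i'' $ a $ b * \<theta>0 $ b)"
      by (simp add: sum_distrib_right) (rule sum.swap)
    finally show ?thesis by simp
  qed
  also have "(\<Sum>r<m i. A r $ a * pairing G (coef_obs i r)) + (\<Sum>i''\<in>S. \<Sum>b\<in>UNIV. B i'' $ a $ b * pairing G (coef_direct i'' b))
      = pairing G (coef_blk i A B a)"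
    unfolding coef_blk_def S_def[symmetric] pairing_add pairing_sum pairing_scale ..
  finally show ?thesis unfolding G_def .
qed

section \<open>The optimal linear unbiased estimator\<close>

definition opt_A :: "nat \<Rightarrow> nat \<Rightarrow> real^'d" where "opt_A i r = (shrink_weight i i / \<beta> i) *\<^sub>R X i r"
definition opt_B :: "nat \<Rightarrow> nat \<Rightarrow> real^'d^'d" where "opt_B i i'' = shrink_weight i i'' *\<^sub>R mat 1"

lemma blk_times_Z_opt:
  assumes i: "i < n"
  shows "blk_times_Z X m n i (opt_A i) (opt_B i) = mat 1"
proof -
  have b: "\<beta> i > 0" using gram_eq i by auto
  have "blk_times_Z X m n i (opt_A i) (opt_B i) $ a $ b' = (if a = b' then 1 else 0)" for a b'
  proof -
    have "blk_times_Z X m n i (opt_A i) (opt_B i) $ a $ b' = shrink_weight i i / \<beta> i * (\<Sum>r<m i. X i r $ a * X i r $ b')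
        + (\<Sum>i''\<in>{..<n}-{i}. shrink_weight i i'') * (if a = b' then 1 else 0)"
      unfolding blk_times_Z_def opt_A_def opt_B_def
      by (simp add: sum_component mat_def sum_distrib_left sum_distrib_right algebra_simps)
    also have "\<dots> = (shrink_weight i i + (\<Sum>i''\<in>{..<n}-{i}. shrink_weight i i'')) * (if a = b' then 1 else 0)"
      unfolding gram_orthogonal_entry[OF i] using b by auto
    also have "shrink_weight i i + (\<Sum>i''\<in>{..<n}-{i}. shrink_weight i i'') = 1"
      using sum_shrink_weight[OF i] i by (simp add: sum.remove[of "{..<n}" i])
    finally show ?thesis by simp
  qed
  then show ?thesis by (simp add: vec_eq_iff mat_def)
qed

lemma blk_apply_opt:
  assumes i: "i < n" and t: "t i = direct_est X m i yi"
  shows "blk_apply m n i (opt_A i) (opt_B i) yi t = client_fit i t"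
proof -
  have "(\<Sum>r<m i. yi r *\<^sub>R opt_A i r) = shrink_weight i i *\<^sub>R t i"
    unfolding t direct_est_orthogonal[OF i] opt_A_def Xty_def by (simp add: scaleR_sum_right) (rule sum.cong, simp_all add: mult.commute)
  moreover have "(\<Sum>i'\<in>{..<n} - {i}. opt_B i i' *v t i') = (\<Sum>i'\<in>{..<n} - {i}. shrink_weight i i' *\<^sub>R t i')"
    unfolding opt_B_def by (simp add: scaleR_matrix_vector_assoc[symmetric])
  ultimately show ?thesis
    unfolding blk_apply_def client_fit_lin[OF i] using i by (simp add: sum.remove[of "{..<n}" i])
qed

lemma coef_blk_opt:
  assumes i: "i < n"
  shows "coef_blk i (opt_A i) (opt_B i) a \<iota> = (\<Sum>i'<n. shrink_weight i i' * coef_direct i' a \<iota>)"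
proof -
  have b: "\<beta> i > 0" using gram_eq i by auto
  have 1: "(\<Sum>b\<in>UNIV. opt_B i i'' $ a $ b * coef_direct i'' b \<iota>) = shrink_weight i i'' * coef_direct i'' a \<iota>" for i''
  proof -
    have "(\<Sum>b\<in>UNIV. opt_B i i'' $ a $ b * coef_direct i'' b \<iota>) = (\<Sum>b\<in>UNIV. if a = b then shrink_weight i i'' * coef_direct i'' b \<iota> else 0)"
      unfolding opt_B_def by (intro sum.cong refl) (simp add: mat_def)
    then show ?thesis by (simp add: sum.delta)
  qed
  have "(\<Sum>r<m i. opt_A i r $ a * coef_obs i r \<iota>) = shrink_weight i i / \<beta> i * (\<Sum>b\<in>UNIV. (\<Sum>r<m i. X i r $ a * X i r $ b) * coef_param i b \<iota>)
        + shrink_weight i i * (\<Sum>r<m i. X i r $ a / \<beta> i * unit_coef (ObsN i r) \<iota>)"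
  proof -
    have "(\<Sum>r<m i. opt_A i r $ a * coef_obs i r \<iota>) = (\<Sum>r<m i. \<Sum>b\<in>UNIV. shrink_weight i i / \<beta> i * (X i r $ a * X i r $ b * coef_param i b \<iota>))
        + (\<Sum>r<m i. shrink_weight i i * (X i r $ a / \<beta> i * unit_coef (ObsN i r) \<iota>))"
      unfolding opt_A_def coef_obs_def sum.distrib[symmetric]
      by (intro sum.cong refl) (simp add: sum_distrib_left sum_divide_distrib algebra_simps)
    also have "(\<Sum>r<m i. \<Sum>b\<in>UNIV. shrink_weight i i / \<beta> i * (X i r $ a * X i r $ b * coef_param i b \<iota>))
        = (\<Sum>b\<in>UNIV. \<Sum>r<m i. shrink_weight i i / \<beta> i * (X i r $ a * X i r $ b * coef_param i b \<iota>))" by (rule sum.swap)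
    finally show ?thesis by (simp add: sum_distrib_left sum_distrib_right)
  qed
  also have "\<dots> = shrink_weight i i * coef_direct i a \<iota>"
    unfolding gram_orthogonal_entry[OF i] using b
    by (simp add: if_distrib[of "\<lambda>x. x * _"] sum.delta coef_direct_def distrib_left cong: if_cong)
  finally have 2: "(\<Sum>r<m i. opt_A i r $ a * coef_obs i r \<iota>) = shrink_weight i i * coef_direct i a \<iota>" .
  show ?thesis unfolding coef_blk_def 1 2 using i by (simp add: sum.remove[of "{..<n}" i])
qed

lemma coef_blk_split:
  "coef_blk i A B a \<iota> = coef_blk i A1 B1 a \<iota> + coef_blk i (\<lambda>r. A r - A1 r) (\<lambda>i'. B i' - B1 i') a \<iota>"
  unfolding coef_blk_def by (simp add: algebra_simps sum.distrib[symmetric] sum_subtractf[symmetric])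

lemma blk_times_Z_split:
  "blk_times_Z X m n i A B = blk_times_Z X m n i A1 B1 + blk_times_Z X m n i (\<lambda>r. A r - A1 r) (\<lambda>i'. B i' - B1 i')"
  unfolding blk_times_Z_def
  by (simp add: vec_eq_iff sum_component sum_subtractf algebra_simps)

lemma cov_add_self: "cov (\<lambda>\<iota>. x \<iota> + y \<iota>) (\<lambda>\<iota>. x \<iota> + y \<iota>) = cov x x + 2 * cov x y + cov y y"
  unfolding cov_def pairing_def by (simp add: algebra_simps sum.distrib sum_distrib_left)

lemma hier_est_eq_blk_apply_opt:
  assumes i: "i < n" and t: "\<forall>i'<n. t i' = direct_est X m i' (y i')"
  shows "hier_est k n m X cl (\<lambda>_. 1 / sb\<^sup>2) (\<lambda>i'. 1 / (sbj (cl i'))\<^sup>2) sig y i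
    = blk_apply m n i (opt_A i) (opt_B i) (y i) t"
  using hier_est_eq_client_fit[OF t i] blk_apply_opt[OF i] t i by simp

end

section \<open>Risk of linear unbiased estimators\<close>

locale hier_gauss_model = hier_model n k cl m X sb sbj sig \<beta> + prob_space M
  for n k cl m and X :: "nat \<Rightarrow> nat \<Rightarrow> real^'d::finite" and sb sbj sig \<beta> and M :: "'a measure" +
  fixes g :: "'d noise_idx \<Rightarrow> 'a \<Rightarrow> real" and \<theta>0 :: "real^'d"
  assumes indep_noise: "indep_vars (\<lambda>_. borel) g (noise_set k n m)"
    and normal_noise: "\<forall>\<iota>\<in>noise_set k n m. distributed M lborel (g \<iota>) (normal_density 0 (noise_sd sb sbj sig cl \<iota>))"
begin

definition risk :: "nat \<Rightarrow> (nat \<Rightarrow> real^'d) \<Rightarrow> (nat \<Rightarrow> real^'d^'d) \<Rightarrow> real" where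
  "risk i A B = (\<integral>\<omega>. (norm (blk_apply m n i A B (obs X \<theta>0 cl g i \<omega>)
      (\<lambda>i'. direct_est X m i' (obs X \<theta>0 cl g i' \<omega>)) - client_param \<theta>0 cl g i \<omega>))\<^sup>2 \<partial>M)"

lemma risk_eq_cov_sum:
  assumes i: "i < n" and Z: "blk_times_Z X m n i A B = mat 1"
  shows "risk i A B
    = (\<Sum>a\<in>UNIV. cov (\<lambda>\<iota>. coef_blk i A B a \<iota> - coef_param i a \<iota>) (\<lambda>\<iota>. coef_blk i A B a \<iota> - coef_param i a \<iota>))"
proof -
  have pos: "\<forall>\<iota>\<in>noises. sd \<iota> > 0"
  proof
    fix \<iota> assume "\<iota> \<in> noises"
    then show "sd \<iota> > 0" using sb_pos sbj_pos sig_pos cl_lt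
      by (cases \<iota>) (auto simp: noises_def noise_set_def)
  qed
  have normal: "\<forall>\<iota>\<in>noises. distributed M lborel (g \<iota>) (\<lambda>x. ennreal (normal_density 0 (sd \<iota>) x))"
    using normal_noise by (simp add: noises_def sd_def)
  have indep: "indep_vars (\<lambda>_. borel) g noises" using indep_noise by (simp add: noises_def)
  define \<alpha> where "\<alpha> a = (\<lambda>\<iota>. coef_blk i A B a \<iota> - coef_param i a \<iota>)" for a
  \<comment> \<open>Unbiasedness \<open>L Z\<^sub>i = I\<close> cancels the deterministic part \<open>\<theta>0\<close> of every coordinate.\<close>
  have err: "(blk_apply m n i A B (obs X \<theta>0 cl g i \<omega>) (\<lambda>i'. direct_est X m i' (obs X \<theta>0 cl g i' \<omega>))
             - client_param \<theta>0 cl g i \<omega>) $ a = (\<Sum>\<iota>\<in>noises. \<alpha> a \<iota> * g \<iota> \<omega>)" for \<omega> a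
    unfolding vector_minus_component blk_apply_component[OF i] client_param_component[OF i] Z \<alpha>_def
      pairing_diff[symmetric]
    by (simp add: pairing_def sum_subtractf left_diff_distrib)
  have norm_sq: "(norm v)\<^sup>2 = (\<Sum>a\<in>UNIV. (v $ a)\<^sup>2)" for v :: "real^'d"
    unfolding power2_norm_eq_inner by (simp add: inner_vec_def power2_eq_square)
  note moments = integral_square_indep_normal_sum[OF finite_noises indep normal pos]
  have "risk i A B = (\<integral>\<omega>. (\<Sum>a\<in>UNIV. (\<Sum>\<iota>\<in>noises. \<alpha> a \<iota> * g \<iota> \<omega>)\<^sup>2) \<partial>M)"
    unfolding risk_def norm_sq err ..
  also have "\<dots> = (\<Sum>a\<in>UNIV. (\<integral>\<omega>. (\<Sum>\<iota>\<in>noises. \<alpha> a \<iota> * g \<iota> \<omega>)\<^sup>2 \<partial>M))"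
    by (rule Bochner_Integration.integral_sum) (rule moments(1))
  also have "\<dots> = (\<Sum>a\<in>UNIV. cov (\<alpha> a) (\<alpha> a))"
    unfolding moments(2) by (simp add: cov_def pairing_def power2_eq_square mult.assoc)
  finally show ?thesis unfolding \<alpha>_def .
qed

lemma risk_opt_le:
  assumes i: "i < n" and Z: "blk_times_Z X m n i A B = mat 1"
  shows "risk i (opt_A i) (opt_B i) \<le> risk i A B"
proof -
  define D where "D a = coef_blk i (\<lambda>r. A r - opt_A i r) (\<lambda>i'. B i' - opt_B i i') a" for a
  have ZD: "blk_times_Z X m n i (\<lambda>r. A r - opt_A i r) (\<lambda>i'. B i' - opt_B i i') = 0"
    using blk_times_Z_split[of i A B "opt_A i" "opt_B i"] Z blk_times_Z_opt[OF i] by simp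
  have err_opt: "(\<lambda>\<iota>. coef_blk i (opt_A i) (opt_B i) a \<iota> - coef_param i a \<iota>) = coef_opt_err i a" for a
    by (simp add: fun_eq_iff coef_blk_opt[OF i] coef_opt_err_def)
  have err: "(\<lambda>\<iota>. coef_blk i A B a \<iota> - coef_param i a \<iota>) = (\<lambda>\<iota>. coef_opt_err i a \<iota> + D a \<iota>)" for a
    by (simp add: fun_eq_iff D_def coef_blk_split[of i A B _ _ "opt_A i" "opt_B i"] coef_blk_opt[OF i]
        coef_opt_err_def)
  have orth: "cov (coef_opt_err i a) (D a) = 0" for a
    using cov_opt_err_coef_blk[OF i, where A="\<lambda>r. A r - opt_A i r" and B="\<lambda>i'. B i' - opt_B i i'" and a=a] ZD
    by (simp add: D_def[abs_def])
  have "cov (coef_opt_err i a) (coef_opt_err i a)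
      \<le> cov (\<lambda>\<iota>. coef_opt_err i a \<iota> + D a \<iota>) (\<lambda>\<iota>. coef_opt_err i a \<iota> + D a \<iota>)" for a
    using cov_add_self[of "coef_opt_err i a" "D a"] orth cov_nonneg[of "D a"] by simp
  then show ?thesis
    unfolding risk_eq_cov_sum[OF i Z] risk_eq_cov_sum[OF i blk_times_Z_opt[OF i]] err err_opt
    by (rule sum_mono)
qed

end

theorem mainTheorem11:
  fixes M :: "'a measure" and g :: "'d::finite noise_idx \<Rightarrow> 'a \<Rightarrow> real"
    and n k i :: nat and cl m :: "nat \<Rightarrow> nat" and X :: "nat \<Rightarrow> nat \<Rightarrow> real^'d"
    and \<theta>0 :: "real^'d" and sb :: real and sbj sig \<beta> :: "nat \<Rightarrow> real"
    and y :: "'a \<Rightarrow> nat \<Rightarrow> nat \<Rightarrow> real" and \<theta>hat :: "'a \<Rightarrow> nat \<Rightarrow> real^'d"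
    and \<theta>d :: "'a \<Rightarrow> nat \<Rightarrow> real^'d" and \<theta>star :: "'a \<Rightarrow> real^'d"
  assumes "prob_space M"
    and "\<forall>i'<n. cl i' < k" and "\<forall>j<k. \<exists>i'<n. cl i' = j"
    and "sb > 0" and "\<forall>j<k. sbj j > 0" and "\<forall>i'<n. sig i' > 0"
    and "\<forall>i'<n. \<beta> i' > 0 \<and> gram X m i' = \<beta> i' *\<^sub>R mat 1"
    and "prob_space.indep_vars M (\<lambda>_. borel) g (noise_set k n m)"
    and "\<forall>\<iota>\<in>noise_set k n m. distributed M lborel (g \<iota>) (normal_density 0 (noise_sd sb sbj sig cl \<iota>))"
    and "i < n"
  defines "y \<equiv> \<lambda>\<omega> i' r. obs X \<theta>0 cl g i' \<omega> r"
    and "\<theta>hat \<equiv> \<lambda>\<omega>. hier_est k n m X cl (\<lambda>_. 1 / sb\<^sup>2) (\<lambda>i'. 1 / (sbj (cl i'))\<^sup>2) sig (y \<omega>)"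
    and "\<theta>d \<equiv> \<lambda>\<omega> i'. direct_est X m i' (y \<omega> i')"
    and "\<theta>star \<equiv> client_param \<theta>0 cl g i"
  shows "(\<exists>A B. blk_times_Z X m n i A B = mat 1 \<and>
              (\<forall>\<omega>. \<theta>hat \<omega> i = blk_apply m n i A B (y \<omega> i) (\<theta>d \<omega>)))
       \<and> (\<forall>A B. blk_times_Z X m n i A B = mat 1 \<longrightarrow>
              (\<integral>\<omega>. (norm (\<theta>hat \<omega> i - \<theta>star \<omega>))\<^sup>2 \<partial>M)
                \<le> (\<integral>\<omega>. (norm (blk_apply m n i A B (y \<omega> i) (\<theta>d \<omega>) - \<theta>star \<omega>))\<^sup>2 \<partial>M))"
proof -
  interpret prob_space M by (rule assms(1))
  interpret hier_gauss_model n k cl m X sb sbj sig \<beta> M g \<theta>0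
  proof unfold_locales
    show "0 < n" using assms(10) by simp
  qed (use assms(2-9) in simp_all)
  have opt: "\<theta>hat \<omega> i = blk_apply m n i (opt_A i) (opt_B i) (y \<omega> i) (\<theta>d \<omega>)" for \<omega>
    unfolding \<theta>hat_def using hier_est_eq_blk_apply_opt[OF assms(10)] by (simp add: \<theta>d_def)
  have risk_eq: "(\<integral>\<omega>. (norm (blk_apply m n i A B (y \<omega> i) (\<theta>d \<omega>) - \<theta>star \<omega>))\<^sup>2 \<partial>M) = risk i A B" for A B
    by (simp add: risk_def y_def \<theta>d_def \<theta>star_def)
  show ?thesis
    unfolding opt risk_eq using blk_times_Z_opt[OF assms(10)] risk_opt_le[OF assms(10)] by blast
qed

end
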